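(* Let $(D,V)$ be an admissible pair, let $L$ be the backward shift $Lg(z)=\frac{g(z)-g(0)}{z}$ on $\mathcal{W}H$, and let $M_z$ be multiplication by $z$ on $\mathcal{W}H$ with maximal domain $\mathscr{D}(M_z)=\{f\in\mathcal{W}H: zf\in\mathcal{W}H\}$. Then: (i) $\mathcal{W}V^*\mathcal{W}^{-1}=L$; (ii) if $x\in\mathscr{D}(D^* )$ then $\mathcal{W}x\in\mathscr{D}(M_z)$ and $\mathcal{W}D^*x=M_z\mathcal{W}x$; (iii) $M_z$ is a closed symmetric operator and $(M_z-\lambda I)\mathscr{D}(M_z)=\{f\in\mathcal{W}H: f(\lambda)=0\}$ for every $\lambda\in\mathbb{C}$.
   Context: Let $H$ be a separable complex Hilbert space. A pair $(D,V)$ of operators is called admissible if: (i) $D:\mathscr{D}(D)\subset H\to H$ is a densely defined closed linear operator; (ii) $\dim\ker D=1$; (iii) $D$ has a self-adjoint restriction with compact resolvent; (iv) $V:H\to H$ is a compact operator with $\sigma(V)=\{0\}$; (v) $\operatorname{Ran}V\subset\mathscr{D}(D)$ and $DV=I$. Fix $0\neq\phi_0\in\ker D$ and put $\phi_\lambda=(I-\lambda V)^{-1}\phi_0$ for $\lambda\in\mathbb{C}$ (then $\phi_\lambda$ spans $\ker(D-\lambda I)$). The generalized Fourier transform is $(\mathcal{W}x)(\lambda)=\langle x,\phi_{\bar\lambda}\rangle_H$ for $x\in H$, $\lambda\in\mathbb{C}$; each $\mathcal{W}x$ is entire, $\mathcal{W}$ is injective, and $\mathcal{W}H$ is regarded as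 a Hilbert space of entire functions with norm $\|\mathcal{W}x\|:=\|x\|_H$, so that $\mathcal{W}:H\to\mathcal{W}H$ is unitary. *)

theory Defs
  imports "HOL-Analysis.Analysis" "HOL-Library.Function_Algebras"
begin

class scaleC = scaleR +
  fixes scaleC :: "complex \<Rightarrow> 'a \<Rightarrow> 'a" (infixr \<open>*\<^sub>C\<close> 75)
  assumes scaleR_scaleC: "scaleR r = scaleC (complex_of_real r)"

class complex_vector = scaleC + real_vector +
  assumes scaleC_add_right: "a *\<^sub>C (x + y) = a *\<^sub>C x + a *\<^sub>C y"
    and scaleC_add_left: "(a + b) *\<^sub>C x = a *\<^sub>C x + b *\<^sub>C x"
    and scaleC_scaleC: "a *\<^sub>C b *\<^sub>C x = (a * b) *\<^sub>C x"
    and scaleC_one: "1 *\<^sub>C x = x"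

class complex_inner = complex_vector + real_normed_vector +
  fixes cinner :: "'a \<Rightarrow> 'a \<Rightarrow> complex"
  assumes cinner_commute: "cinner x y = cnj (cinner y x)"
    and cinner_add_left: "cinner (x + y) z = cinner x z + cinner y z"
    and cinner_scaleC_left: "cinner (a *\<^sub>C x) y = a * cinner x y"
    and cinner_nonneg: "0 \<le> Re (cinner x x)"
    and cinner_eq_zero_iff: "cinner x x = 0 \<longleftrightarrow> x = 0"
    and norm_eq_sqrt_cinner: "norm x = sqrt (Re (cinner x x))"

class chilbert = complex_inner + complete_space

definition separable_space :: "'a::topological_space itself \<Rightarrow> bool" where
  "separable_space _ \<longleftrightarrow> (\<exists>C::'a set. countable C \<and> closure C = UNIV)"

definition csubspace :: "'a::complex_vector set \<Rightarrow> bool" where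
  "csubspace S \<longleftrightarrow> 0 \<in> S \<and> (\<forall>x\<in>S. \<forall>y\<in>S. x + y \<in> S) \<and> (\<forall>c x. x \<in> S \<longrightarrow> c *\<^sub>C x \<in> S)"

definition clinear_on :: "'a::complex_vector set \<Rightarrow> ('a \<Rightarrow> 'b::complex_vector) \<Rightarrow> bool" where
  "clinear_on S T \<longleftrightarrow> csubspace S \<and>
     (\<forall>x\<in>S. \<forall>y\<in>S. T (x + y) = T x + T y) \<and> (\<forall>c. \<forall>x\<in>S. T (c *\<^sub>C x) = c *\<^sub>C T x)"

definition bounded_clinear_op :: "('a::complex_inner \<Rightarrow> 'b::complex_inner) \<Rightarrow> bool" where
  "bounded_clinear_op T \<longleftrightarrow> clinear_on UNIV T \<and> (\<exists>K. \<forall>x. norm (T x) \<le> K * norm x)"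

definition compact_op :: "('a::complex_inner \<Rightarrow> 'b::complex_inner) \<Rightarrow> bool" where
  "compact_op T \<longleftrightarrow> bounded_clinear_op T \<and> compact (closure (T ` ball 0 1))"

definition bspectrum :: "('a::complex_inner \<Rightarrow> 'a) \<Rightarrow> complex set" where
  "bspectrum T = {\<mu>. \<not> (\<exists>R. bounded_clinear_op R \<and> (\<forall>x. R (T x - \<mu> *\<^sub>C x) = x)
                                   \<and> (\<forall>y. T (R y) - \<mu> *\<^sub>C R y = y))}"

text \<open>Adjoint of an operator with domain \<open>S\<close> (meaningful for densely defined operators).\<close>
definition adj_dom :: "'a::complex_inner set \<Rightarrow> ('a \<Rightarrow> 'a) \<Rightarrow> 'a set" where
  "adj_dom S T = {y. \<exists>z. \<forall>x\<in>S. cinner (T x) y = cinner x z}"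

definition adj :: "'a::complex_inner set \<Rightarrow> ('a \<Rightarrow> 'a) \<Rightarrow> 'a \<Rightarrow> 'a" where
  "adj S T y = (THE z. \<forall>x\<in>S. cinner (T x) y = cinner x z)"

definition ip_norm :: "('a \<Rightarrow> 'a \<Rightarrow> complex) \<Rightarrow> 'a \<Rightarrow> real" where
  "ip_norm ip x = sqrt (Re (ip x x))"

definition ip_conv :: "('a::ab_group_add \<Rightarrow> 'a \<Rightarrow> complex) \<Rightarrow> (nat \<Rightarrow> 'a) \<Rightarrow> 'a \<Rightarrow> bool" where
  "ip_conv ip s a \<longleftrightarrow> (\<lambda>n. ip_norm ip (s n - a)) \<longlonglongrightarrow> 0"

definition op_dense :: "('a::ab_group_add \<Rightarrow> 'a \<Rightarrow> complex) \<Rightarrow> 'a set \<Rightarrow> 'a set \<Rightarrow> bool" where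
  "op_dense ip X S \<longleftrightarrow> S \<subseteq> X \<and> (\<forall>a\<in>X. \<exists>s. (\<forall>n. s n \<in> S) \<and> ip_conv ip s a)"

definition op_closed :: "('a::ab_group_add \<Rightarrow> 'a \<Rightarrow> complex) \<Rightarrow> 'a set \<Rightarrow> 'a set \<Rightarrow> ('a \<Rightarrow> 'a) \<Rightarrow> bool" where
  "op_closed ip X S T \<longleftrightarrow> S \<subseteq> X \<and> (\<forall>x\<in>S. T x \<in> X) \<and>
     (\<forall>s a b. (\<forall>n. s n \<in> S) \<and> a \<in> X \<and> b \<in> X \<and> ip_conv ip s a \<and> ip_conv ip (\<lambda>n. T (s n)) b
        \<longrightarrow> a \<in> S \<and> T a = b)"

definition op_symmetric :: "('a::ab_group_add \<Rightarrow> 'a \<Rightarrow> complex) \<Rightarrow> 'a set \<Rightarrow> 'a set \<Rightarrow> ('a \<Rightarrow> 'a) \<Rightarrow> bool" where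
  "op_symmetric ip X S T \<longleftrightarrow> op_dense ip X S \<and> (\<forall>x\<in>S. T x \<in> X) \<and>
     (\<forall>x\<in>S. \<forall>y\<in>S. ip (T x) y = ip x (T y))"

definition self_adjoint_op :: "'a::complex_inner set \<Rightarrow> ('a \<Rightarrow> 'a) \<Rightarrow> bool" where
  "self_adjoint_op S T \<longleftrightarrow> clinear_on S T \<and> op_dense cinner UNIV S \<and>
     adj_dom S T = S \<and> (\<forall>y\<in>S. adj S T y = T y)"

definition has_compact_resolvent :: "'a::complex_inner set \<Rightarrow> ('a \<Rightarrow> 'a) \<Rightarrow> bool" where
  "has_compact_resolvent S T \<longleftrightarrow> (\<exists>\<mu> R. compact_op R \<and>
     (\<forall>y. R y \<in> S \<and> T (R y) - \<mu> *\<^sub>C R y = y) \<and> (\<forall>x\<in>S. R (T x - \<mu> *\<^sub>C x) = x))"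

definition admissible :: "'a::chilbert set \<Rightarrow> ('a \<Rightarrow> 'a) \<Rightarrow> ('a \<Rightarrow> 'a) \<Rightarrow> bool" where
  "admissible domD D V \<longleftrightarrow>
     clinear_on domD D \<and> op_dense cinner UNIV domD \<and> op_closed cinner UNIV domD D \<and>
     (\<exists>\<phi>. \<phi> \<noteq> 0 \<and> {x\<in>domD. D x = 0} = range (\<lambda>c. c *\<^sub>C \<phi>)) \<and>
     (\<exists>S. S \<subseteq> domD \<and> self_adjoint_op S D \<and> has_compact_resolvent S D) \<and>
     compact_op V \<and> bspectrum V = {0} \<and>
     range V \<subseteq> domD \<and> (\<forall>x. D (V x) = x)"

definition phi :: "('a::chilbert \<Rightarrow> 'a) \<Rightarrow> 'a \<Rightarrow> complex \<Rightarrow> 'a" where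
  "phi V \<phi>0 \<mu> = (THE y. y - \<mu> *\<^sub>C V y = \<phi>0)"

definition gft :: "('a::chilbert \<Rightarrow> 'a) \<Rightarrow> 'a \<Rightarrow> 'a \<Rightarrow> complex \<Rightarrow> complex" where
  "gft V \<phi>0 x = (\<lambda>\<mu>. cinner x (phi V \<phi>0 (cnj \<mu>)))"

definition WH :: "('a::chilbert \<Rightarrow> 'a) \<Rightarrow> 'a \<Rightarrow> (complex \<Rightarrow> complex) set" where
  "WH V \<phi>0 = range (gft V \<phi>0)"

definition WH_inner :: "('a::chilbert \<Rightarrow> 'a) \<Rightarrow> 'a \<Rightarrow> (complex \<Rightarrow> complex) \<Rightarrow> (complex \<Rightarrow> complex) \<Rightarrow> complex" where
  "WH_inner V \<phi>0 f g = cinner (inv_into UNIV (gft V \<phi>0) f) (inv_into UNIV (gft V \<phi>0) g)"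

text \<open>Backward shift \<open>Lg(z) = (g(z) - g(0))/z\<close>, with value \<open>g'(0)\<close> at \<open>z = 0\<close> (its entire extension).\<close>
definition backward_shift :: "(complex \<Rightarrow> complex) \<Rightarrow> complex \<Rightarrow> complex" where
  "backward_shift g z = (if z = 0 then deriv g 0 else (g z - g 0) / z)"

definition Mz_dom :: "('a::chilbert \<Rightarrow> 'a) \<Rightarrow> 'a \<Rightarrow> (complex \<Rightarrow> complex) set" where
  "Mz_dom V \<phi>0 = {f \<in> WH V \<phi>0. (\<lambda>z. z * f z) \<in> WH V \<phi>0}"

definition Mz :: "(complex \<Rightarrow> complex) \<Rightarrow> complex \<Rightarrow> complex" where
  "Mz f = (\<lambda>z. z * f z)"

end

theory Submission
  imports Defs
begin

(* Since D phi_l = l phi_l and V phi_l = (phi_l - phi_0) / l, the transform W turns V^* into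
   the backward shift and D^* into multiplication by z.  The substantial point is that the
   phi_l are complete, i.e. W is injective.  Let R be the compact resolvent of a self-adjoint
   restriction of D; it is normal.  The orthogonal complement of all phi_l is closed and
   invariant under R and R^*, so if it were nonzero it would contain an eigenvector of R.
   Such a vector is an eigenvector of D, hence a multiple of some phi_l, which is absurd.
   Once W is unitary onto WH, the identity L (z f) = f shows that the domain of M_z is the
   image of the domain of D^*; closedness and symmetry of M_z then come from those of D^*,
   and the range of D^* - l is the orthogonal complement of phi_(conj l), because D - conj l
   has a bounded right inverse whose defect lies in the span of phi_(conj l). *)

section \<open>Complex inner product spaces\<close>

global_interpretation complex_vector: vector_space "scaleC :: complex \<Rightarrow> 'a \<Rightarrow> 'a::complex_vector"
  rewrites "module.subspace scaleC = csubspace"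
proof -
  show "vector_space (scaleC :: complex \<Rightarrow> 'a \<Rightarrow> 'a::complex_vector)"
    by unfold_locales (simp_all add: scaleC_add_right scaleC_add_left scaleC_scaleC scaleC_one)
  then interpret vector_space "scaleC :: complex \<Rightarrow> 'a \<Rightarrow> 'a::complex_vector" .
  show "subspace = csubspace" by (auto simp: subspace_def csubspace_def fun_eq_iff)
qed

lemma cinner_zero_left [simp]: "cinner 0 y = 0"
  by (metis add_cancel_right_right add_0 cinner_add_left)

lemma cinner_zero_right [simp]: "cinner y 0 = 0"
  by (subst cinner_commute) simp

lemma cinner_add_right: "cinner x (y + z) = cinner x y + cinner x z"
  by (subst (1 2 3) cinner_commute) (simp add: cinner_add_left)

lemma cinner_scaleC_right: "cinner x (a *\<^sub>C y) = cnj a * cinner x y"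
  by (subst (1 2) cinner_commute) (simp add: cinner_scaleC_left)

lemma cinner_minus_left: "cinner (- x) y = - cinner x y"
  using cinner_scaleC_left[of "-1" x y] by simp

lemma cinner_minus_right: "cinner x (- y) = - cinner x y"
  using cinner_scaleC_right[of x "-1" y] by simp

lemma cinner_diff_left: "cinner (x - y) z = cinner x z - cinner y z"
  by (simp only: diff_conv_add_uminus cinner_add_left cinner_minus_left)

lemma cinner_diff_right: "cinner x (y - z) = cinner x y - cinner x z"
  by (simp only: diff_conv_add_uminus cinner_add_right cinner_minus_right)

lemmas cinner_simps = cinner_add_left cinner_add_right cinner_diff_left cinner_diff_right
  cinner_scaleC_left cinner_scaleC_right

lemma cinner_self: "cinner x x = complex_of_real ((norm x)\<^sup>2)"
proof (rule complex_eqI)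
  show "Im (cinner x x) = Im (complex_of_real ((norm x)\<^sup>2))"
    using cinner_commute[of x x] by (metis Im_complex_of_real Reals_cnj_iff complex_is_Real_iff)
  show "Re (cinner x x) = Re (complex_of_real ((norm x)\<^sup>2))"
    using cinner_nonneg[of x] by (simp add: norm_eq_sqrt_cinner)
qed

declare cinner_eq_zero_iff [simp]

lemma cinner_eqI: "(\<And>x. cinner x a = cinner x b) \<Longrightarrow> a = b"
  by (metis cinner_diff_right cinner_eq_zero_iff right_minus_eq)

lemma norm_scaleC: "norm (a *\<^sub>C x) = cmod a * norm (x::'a::complex_inner)"
proof -
  have "complex_of_real ((norm (a *\<^sub>C x))\<^sup>2) = cinner (a *\<^sub>C x) (a *\<^sub>C x)"
    by (simp add: cinner_self)
  also have "\<dots> = (a * cnj a) * cinner x x"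
    by (simp add: cinner_scaleC_left cinner_scaleC_right mult.assoc)
  also have "\<dots> = complex_of_real ((cmod a * norm x)\<^sup>2)"
    by (simp only: cinner_self complex_norm_square [symmetric] power_mult_distrib of_real_mult)
  finally have "(norm (a *\<^sub>C x))\<^sup>2 = (cmod a * norm x)\<^sup>2"
    using of_real_eq_iff by blast
  thus ?thesis by (simp add: power2_eq_iff_nonneg)
qed

lemma norm_diff_scaleC_sq:
  "(norm (u - t *\<^sub>C m))\<^sup>2 = (norm u)\<^sup>2 - 2 * Re (cnj t * cinner u m) + (cmod t)\<^sup>2 * (norm m)\<^sup>2"
proof -
  have e: "cinner (u - t *\<^sub>C m) (u - t *\<^sub>C m)
      = cinner u u - cnj t * cinner u m - t * cinner m u + t * cnj t * cinner m m"
    by (simp add: cinner_simps algebra_simps)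
  have "Re (cinner (u - t *\<^sub>C m) (u - t *\<^sub>C m))
      = Re (cinner u u) - Re (cnj t * cinner u m) - Re (t * cinner m u)
        + Re (t * cnj t) * Re (cinner m m)"
    unfolding e by (simp add: cinner_self)
  also have "Re (t * cinner m u) = Re (cnj t * cinner u m)"
    by (subst cinner_commute[of m u]) simp
  also have "Re (t * cnj t) = (cmod t)\<^sup>2"
    by (simp add: complex_norm_square [symmetric])
  finally show ?thesis by (simp add: cinner_self)
qed

lemma Cauchy_Schwarz_cinner: "cmod (cinner x y) \<le> norm x * norm y"
proof (cases "y = 0")
  case False
  define n where "n = (norm y)\<^sup>2"
  define c where "c = cinner x y"
  define t where "t = c / complex_of_real n"
  have n0: "n > 0" using False by (simp add: n_def)
  have "0 \<le> (norm (x - t *\<^sub>C y))\<^sup>2" by simp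
  also have "\<dots> = (norm x)\<^sup>2 - 2 * Re (cnj t * c) + (cmod t)\<^sup>2 * n"
    by (simp add: norm_diff_scaleC_sq c_def n_def)
  also have "cnj t * c = complex_of_real ((cmod c)\<^sup>2 / n)"
    by (simp add: t_def complex_norm_square [symmetric] mult.commute)
  also have "(cmod t)\<^sup>2 * n = (cmod c)\<^sup>2 / n"
    using n0 by (simp add: t_def norm_divide power2_eq_square)
  finally have "(cmod c)\<^sup>2 \<le> (norm x)\<^sup>2 * n"
    using n0 by (simp add: field_simps)
  hence "(cmod c)\<^sup>2 \<le> (norm x * norm y)\<^sup>2" by (simp add: n_def power_mult_distrib)
  thus ?thesis unfolding c_def by (simp add: power2_le_iff_abs_le)
qed simp

lemma parallelogram_law:
  "(norm (a + b))\<^sup>2 + (norm (a - b))\<^sup>2 = 2 * (norm a)\<^sup>2 + 2 * (norm (b::'a::complex_inner))\<^sup>2"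
proof -
  have "complex_of_real ((norm (a + b))\<^sup>2 + (norm (a - b))\<^sup>2)
      = cinner (a + b) (a + b) + cinner (a - b) (a - b)"
    by (simp add: cinner_self)
  also have "\<dots> = 2 * cinner a a + 2 * cinner b b"
    by (simp add: cinner_simps)
  also have "\<dots> = complex_of_real (2 * (norm a)\<^sup>2 + 2 * (norm b)\<^sup>2)"
    by (simp add: cinner_self)
  finally show ?thesis using of_real_eq_iff by blast
qed

section \<open>Bounded operators, density and adjoints\<close>

lemma tendsto_bounded_additive:
  fixes T :: "'a::real_normed_vector \<Rightarrow> 'b::real_normed_vector"
  assumes bound: "\<And>x. norm (T x) \<le> K * norm x" and diff: "\<And>x y. T (x - y) = T x - T y"
    and f: "(f \<longlongrightarrow> l) F"
  shows "((\<lambda>n. T (f n)) \<longlongrightarrow> T l) F"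
proof -
  have "((\<lambda>n. K * norm (f n - l)) \<longlongrightarrow> 0) F"
    using tendsto_mult_left[OF f[THEN LIM_zero, THEN tendsto_norm_zero], of K] by simp
  hence "((\<lambda>n. T (f n) - T l) \<longlongrightarrow> 0) F"
    by (rule Lim_null_comparison[rotated]) (simp add: bound diff[symmetric])
  thus ?thesis by (simp add: LIM_zero_iff)
qed

lemma tendsto_scaleC: "(f \<longlongrightarrow> l) F \<Longrightarrow> ((\<lambda>n. c *\<^sub>C f n) \<longlongrightarrow> c *\<^sub>C (l::'a::complex_inner)) F"
  by (rule tendsto_bounded_additive[where K="cmod c"])
     (auto simp: norm_scaleC complex_vector.scale_right_diff_distrib)

lemma tendsto_cinner:
  fixes f g :: "_ \<Rightarrow> 'a::complex_inner"
  assumes f: "(f \<longlongrightarrow> a) F" and g: "(g \<longlongrightarrow> b) F"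
  shows "((\<lambda>n. cinner (f n) (g n)) \<longlongrightarrow> cinner a b) F"
proof -
  have f0: "((\<lambda>n. norm (f n - a)) \<longlongrightarrow> 0) F" and g0: "((\<lambda>n. norm (g n - b)) \<longlongrightarrow> 0) F"
    using f g by (simp_all add: LIM_zero tendsto_norm_zero_iff)
  have 1: "((\<lambda>n. cinner (f n - a) (g n - b)) \<longlongrightarrow> 0) F"
    by (rule Lim_null_comparison[where g="\<lambda>n. norm (f n - a) * norm (g n - b)"])
       (auto intro!: always_eventually Cauchy_Schwarz_cinner simp: tendsto_mult[OF f0 g0, simplified])
  have 2: "((\<lambda>n. cinner (f n - a) b) \<longlongrightarrow> 0) F"
    by (rule Lim_null_comparison[where g="\<lambda>n. norm (f n - a) * norm b"])
       (auto intro!: always_eventually Cauchy_Schwarz_cinner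
         simp: tendsto_mult[OF f0 tendsto_const, simplified])
  have 3: "((\<lambda>n. cinner a (g n - b)) \<longlongrightarrow> 0) F"
    by (rule Lim_null_comparison[where g="\<lambda>n. norm a * norm (g n - b)"])
       (auto intro!: always_eventually Cauchy_Schwarz_cinner
         simp: tendsto_mult[OF tendsto_const g0, simplified])
  have "((\<lambda>n. cinner (f n - a) (g n - b) + cinner (f n - a) b + cinner a (g n - b)) \<longlongrightarrow> 0) F"
    using tendsto_add[OF tendsto_add[OF 1 2] 3] by simp
  thus ?thesis by (simp add: cinner_diff_left cinner_diff_right LIM_zero_iff)
qed

lemma ip_norm_cinner: "ip_norm cinner x = norm x"
  by (simp add: ip_norm_def norm_eq_sqrt_cinner)

lemma ip_conv_cinner: "ip_conv cinner s a \<longleftrightarrow> s \<longlonglongrightarrow> a"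
  by (simp add: ip_conv_def ip_norm_cinner tendsto_norm_zero_iff LIM_zero_iff)

lemma bounded_op_add: "bounded_clinear_op T \<Longrightarrow> T (x + y) = T x + T y"
  and bounded_op_scaleC: "bounded_clinear_op T \<Longrightarrow> T (c *\<^sub>C x) = c *\<^sub>C T x"
  by (simp_all add: bounded_clinear_op_def clinear_on_def)

lemma bounded_op_zero: "bounded_clinear_op T \<Longrightarrow> T 0 = 0"
  using bounded_op_scaleC[of T 0 0] by simp

lemma bounded_op_diff: "bounded_clinear_op T \<Longrightarrow> T (x - y) = T x - T y"
  using bounded_op_add[of T x "- y"] bounded_op_scaleC[of T "-1" y] by simp

lemma bounded_op_bound:
  fixes T :: "'a::complex_inner \<Rightarrow> 'b::complex_inner"
  assumes "bounded_clinear_op T"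
  obtains K where "K > 0" "\<And>x. norm (T x) \<le> K * norm x"
proof -
  obtain K where K: "\<And>x. norm (T x) \<le> K * norm x"
    using assms by (auto simp: bounded_clinear_op_def)
  have "norm (T x) \<le> (\<bar>K\<bar> + 1) * norm x" for x
    using K[of x] mult_right_mono[of K "\<bar>K\<bar> + 1" "norm x"] by force
  thus ?thesis using that[of "\<bar>K\<bar> + 1"] by simp
qed

lemma bounded_op_tendsto:
  "bounded_clinear_op T \<Longrightarrow> (f \<longlongrightarrow> l) F \<Longrightarrow> ((\<lambda>n. T (f n)) \<longlongrightarrow> T l) F"
proof -
  assume T: "bounded_clinear_op T" and f: "(f \<longlongrightarrow> l) F"
  obtain K where "\<And>x. norm (T x) \<le> K * norm x" using bounded_op_bound[OF T] by metis
  thus ?thesis by (rule tendsto_bounded_additive) (use T f in \<open>simp_all add: bounded_op_diff\<close>)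
qed

lemma bounded_clinear_opI:
  assumes "\<And>x y. T (x + y) = T x + T y" "\<And>c x. T (c *\<^sub>C x) = c *\<^sub>C T x"
    and "\<And>x. norm (T x) \<le> K * norm x"
  shows "bounded_clinear_op T"
  using assms unfolding bounded_clinear_op_def clinear_on_def csubspace_def by blast

lemma bounded_op_ident: "bounded_clinear_op (\<lambda>x::'a::complex_inner. x)"
  by (rule bounded_clinear_opI[where K=1]) auto

lemma bounded_op_plus:
  fixes S T :: "'a::complex_inner \<Rightarrow> 'b::complex_inner"
  assumes S: "bounded_clinear_op S" and T: "bounded_clinear_op T"
  shows "bounded_clinear_op (\<lambda>x. S x + T x)"
proof -
  obtain KS KT where KS: "\<And>x. norm (S x) \<le> KS * norm x" and KT: "\<And>x. norm (T x) \<le> KT * norm x"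
    by (metis S T bounded_op_bound)
  have "norm (S x + T x) \<le> (KS + KT) * norm x" for x
    using norm_triangle_ineq[of "S x" "T x"] KS[of x] KT[of x] by (simp add: algebra_simps)
  thus ?thesis
    by (intro bounded_clinear_opI)
       (auto simp: bounded_op_add[OF S] bounded_op_add[OF T] bounded_op_scaleC[OF S]
         bounded_op_scaleC[OF T] complex_vector.scale_right_distrib)
qed

lemma bounded_op_scaleC_left:
  fixes T :: "'a::complex_inner \<Rightarrow> 'b::complex_inner"
  assumes T: "bounded_clinear_op T"
  shows "bounded_clinear_op (\<lambda>x. c *\<^sub>C T x)"
proof -
  obtain K where K: "\<And>x. norm (T x) \<le> K * norm x" by (metis T bounded_op_bound)
  have "norm (c *\<^sub>C T x) \<le> (cmod c * K) * norm x" for x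
    using K[of x] by (simp add: norm_scaleC mult.assoc mult_left_mono)
  thus ?thesis
    by (intro bounded_clinear_opI[where K="cmod c * K"])
       (auto simp: bounded_op_add[OF T] bounded_op_scaleC[OF T] complex_vector.scale_right_distrib
         mult.commute)
qed

lemma bounded_op_compose:
  fixes S :: "'b::complex_inner \<Rightarrow> 'c::complex_inner" and T :: "'a::complex_inner \<Rightarrow> 'b"
  assumes S: "bounded_clinear_op S" and T: "bounded_clinear_op T"
  shows "bounded_clinear_op (\<lambda>x. S (T x))"
proof -
  obtain KS KT where KS: "KS > 0" "\<And>x. norm (S x) \<le> KS * norm x"
    and KT: "\<And>x. norm (T x) \<le> KT * norm x"
    by (metis S T bounded_op_bound)
  have "norm (S (T x)) \<le> (KS * KT) * norm x" for x
  proof -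
    have "norm (S (T x)) \<le> KS * norm (T x)" by (rule KS(2))
    also have "\<dots> \<le> KS * (KT * norm x)" using KS(1) KT by (intro mult_left_mono) auto
    finally show ?thesis by (simp add: mult.assoc)
  qed
  thus ?thesis
    by (intro bounded_clinear_opI[where K="KS * KT"])
       (auto simp: bounded_op_add[OF S] bounded_op_add[OF T] bounded_op_scaleC[OF S]
         bounded_op_scaleC[OF T])
qed

lemma op_dense_orthogonal_eq_0:
  assumes "op_dense cinner UNIV S" "\<And>x. x \<in> S \<Longrightarrow> cinner x z = 0"
  shows "z = 0"
proof -
  obtain s where s: "\<And>n. s n \<in> S" "s \<longlonglongrightarrow> z"
    using assms(1) by (auto simp: op_dense_def ip_conv_cinner)
  have "(\<lambda>n. cinner (s n) z) \<longlonglongrightarrow> cinner z z" by (intro tendsto_cinner s tendsto_const)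
  moreover have "(\<lambda>n. cinner (s n) z) = (\<lambda>n. 0)" using s(1) assms(2) by simp
  ultimately have "cinner z z = 0" using LIMSEQ_unique tendsto_const by metis
  thus ?thesis by (simp only: cinner_eq_zero_iff)
qed

lemma adj_eqI:
  assumes "op_dense cinner UNIV S" "\<forall>x\<in>S. cinner (T x) y = cinner x z"
  shows "adj S T y = z"
  unfolding adj_def
proof (rule the_equality)
  fix z' assume "\<forall>x\<in>S. cinner (T x) y = cinner x z'"
  hence "\<And>x. x \<in> S \<Longrightarrow> cinner x (z' - z) = 0" using assms(2) by (simp add: cinner_diff_right)
  hence "z' - z = 0" by (rule op_dense_orthogonal_eq_0[OF assms(1)])
  thus "z' = z" by simp
qed (use assms in simp)

lemma op_dense_UNIV: "op_dense cinner UNIV (UNIV::'a::complex_inner set)"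
  unfolding op_dense_def ip_conv_cinner by (auto intro!: exI[of _ "\<lambda>_. _"])

lemma csubspace_closure:
  fixes S :: "'a::complex_inner set"
  assumes S: "csubspace S"
  shows "csubspace (closure S)"
  unfolding csubspace_def
proof (intro conjI ballI allI impI)
  show "0 \<in> closure S" using S complex_vector.subspace_0 closure_subset by blast
next
  fix x y assume x: "x \<in> closure S" and y: "y \<in> closure S"
  obtain xs where xs: "\<forall>n. xs n \<in> S" "xs \<longlonglongrightarrow> x" using x by (auto simp only: closure_sequential)
  obtain ys where ys: "\<forall>n. ys n \<in> S" "ys \<longlonglongrightarrow> y" using y by (auto simp only: closure_sequential)
  have "\<forall>n. xs n + ys n \<in> S" using xs(1) ys(1) S by (simp add: complex_vector.subspace_add)
  moreover have "(\<lambda>n. xs n + ys n) \<longlonglongrightarrow> x + y" by (intro tendsto_add xs(2) ys(2))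
  ultimately show "x + y \<in> closure S" by (auto simp only: closure_sequential)
next
  fix c x assume "x \<in> closure S"
  then obtain xs where xs: "\<forall>n. xs n \<in> S" "xs \<longlonglongrightarrow> x"
    by (auto simp only: closure_sequential)
  have "\<forall>n. c *\<^sub>C xs n \<in> S" using xs(1) S by (simp add: complex_vector.subspace_scale)
  moreover have "(\<lambda>n. c *\<^sub>C xs n) \<longlonglongrightarrow> c *\<^sub>C x" by (intro tendsto_scaleC xs(2))
  ultimately show "c *\<^sub>C x \<in> closure S" by (auto simp only: closure_sequential)
qed

lemma nearest_point_orthogonal:
  fixes M :: "'a::complex_inner set"
  assumes M: "csubspace M" and p: "p \<in> M" and nearest: "\<And>m. m \<in> M \<Longrightarrow> norm (x - p) \<le> norm (x - m)"
    and m: "m \<in> M"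
  shows "cinner (x - p) m = 0"
proof -
  define c where "c = cinner (x - p) m"
  define s :: real where "s = 1 / ((norm m)\<^sup>2 + 1)"
  have n0: "(norm m)\<^sup>2 + 1 > 0" by (simp add: add_nonneg_pos)
  hence s0: "s > 0" by (simp add: s_def)
  have sm: "s * (norm m)\<^sup>2 < 2"
  proof -
    have "s * (norm m)\<^sup>2 < s * ((norm m)\<^sup>2 + 1)" using s0 by simp
    also have "\<dots> = 1" using n0 by (simp add: s_def)
    finally show ?thesis by simp
  qed
  define t where "t = complex_of_real s * c"
  \<comment> \<open>Compare \<open>p\<close> with the competitor \<open>p + t m\<close>, for a step \<open>t\<close> small enough.\<close>
  have "p + t *\<^sub>C m \<in> M" using M p m by (simp add: complex_vector.subspace_add complex_vector.subspace_scale)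
  hence "norm (x - p) \<le> norm ((x - p) - t *\<^sub>C m)" using nearest by (metis diff_diff_eq)
  hence "(norm (x - p))\<^sup>2 \<le> (norm ((x - p) - t *\<^sub>C m))\<^sup>2" by (simp add: power_mono)
  also have "\<dots> = (norm (x - p))\<^sup>2 - 2 * Re (cnj t * c) + (cmod t)\<^sup>2 * (norm m)\<^sup>2"
    by (simp add: norm_diff_scaleC_sq c_def)
  also have "cnj t * c = complex_of_real (s * (cmod c)\<^sup>2)"
    by (simp add: t_def complex_norm_square [symmetric] mult.commute)
  also have "(cmod t)\<^sup>2 = s\<^sup>2 * (cmod c)\<^sup>2" using s0 by (simp add: t_def norm_mult power_mult_distrib)
  finally have "0 \<le> s * (cmod c)\<^sup>2 * (s * (norm m)\<^sup>2 - 2)"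
    by (simp add: algebra_simps power2_eq_square)
  hence "s * (cmod c)\<^sup>2 \<le> 0" using sm by (simp add: mult_le_0_iff zero_le_mult_iff)
  hence "(cmod c)\<^sup>2 \<le> 0" using s0 by (simp add: mult_le_0_iff)
  thus ?thesis by (simp add: c_def)
qed

lemma norm_diff_le_via_midpoint:
  fixes x a b :: "'a::complex_inner"
  assumes mid: "d \<le> norm (x - (1/2::complex) *\<^sub>C (a + b))" and d: "0 \<le> d"
    and a: "norm (x - a) \<le> d + ea" "0 \<le> ea" "ea \<le> 1"
    and b: "norm (x - b) \<le> d + eb" "0 \<le> eb" "eb \<le> 1"
  shows "(norm (a - b))\<^sup>2 \<le> (4 * d + 2) * (ea + eb)"
proof -
  define u v where "u = x - a" and "v = x - b"
  have "(x - a) + (x - b) = (2::complex) *\<^sub>C (x - (1/2::complex) *\<^sub>C (a + b))"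
    by (simp add: complex_vector.scale_right_diff_distrib complex_vector.scale_left_distrib[of 1 1, simplified]
        algebra_simps)
  hence "norm (u + v) = 2 * norm (x - (1/2::complex) *\<^sub>C (a + b))"
    by (simp add: u_def v_def norm_scaleC)
  hence "(2 * d)\<^sup>2 \<le> (norm (u + v))\<^sup>2" using mid d by (intro power_mono) auto
  moreover have "(norm (u + v))\<^sup>2 + (norm (a - b))\<^sup>2 = 2 * (norm u)\<^sup>2 + 2 * (norm v)\<^sup>2"
    using parallelogram_law[of u v] by (simp add: u_def v_def norm_minus_commute)
  moreover have "(norm u)\<^sup>2 \<le> (d + ea)\<^sup>2" "(norm v)\<^sup>2 \<le> (d + eb)\<^sup>2"
    using a(1) b(1) by (simp_all add: u_def v_def power_mono)
  moreover have "ea * ea \<le> ea" "eb * eb \<le> eb"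
    using a(2,3) b(2,3) by (simp_all add: mult_left_le_one_le)
  ultimately show ?thesis by (simp add: power2_eq_square algebra_simps)
qed

lemma closed_csubspace_nearest_point:
  fixes M :: "'a::chilbert set"
  assumes M: "csubspace M" "closed M"
  obtains p where "p \<in> M" "\<And>m. m \<in> M \<Longrightarrow> norm (x - p) \<le> norm (x - m)"
proof -
  define d where "d = Inf ((\<lambda>m. norm (x - m)) ` M)"
  have ne: "(\<lambda>m. norm (x - m)) ` M \<noteq> {}" using complex_vector.subspace_0[OF M(1)] by auto
  have dle: "d \<le> norm (x - m)" if "m \<in> M" for m
    unfolding d_def using that by (intro cInf_lower bdd_belowI[of _ 0]) auto
  have d0: "0 \<le> d" unfolding d_def by (rule cInf_greatest[OF ne]) auto
  define e :: "nat \<Rightarrow> real" where "e n = 1 / (real n + 1)" for n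
  have e0: "0 < e n" "e n \<le> 1" for n by (auto simp: e_def field_simps)
  have "e = (\<lambda>n. inverse (real (Suc n)))" by (auto simp: e_def inverse_eq_divide add.commute)
  hence e_lim: "e \<longlonglongrightarrow> 0" using LIMSEQ_inverse_real_of_nat by simp
  have "\<exists>m. m \<in> M \<and> norm (x - m) < d + e n" for n
    using cInf_lessD[OF ne, of "d + e n"] e0(1)[of n] by (auto simp: d_def)
  then obtain mm where mmM: "\<And>n. mm n \<in> M" and mmd: "\<And>n. norm (x - mm n) < d + e n"
    by metis
  have "Cauchy mm"
  proof (rule metric_CauchyI)
    fix r :: real assume r: "r > 0"
    define \<delta> where "\<delta> = r\<^sup>2 / (8 * d + 4)"
    have "\<delta> > 0" using r d0 by (simp add: \<delta>_def)
    then obtain N where N: "\<And>n. n \<ge> N \<Longrightarrow> e n < \<delta>"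
      using e_lim e0(1) by (metis LIMSEQ_D diff_zero norm_of_real real_norm_def abs_of_pos)
    show "\<exists>N. \<forall>m\<ge>N. \<forall>n\<ge>N. dist (mm m) (mm n) < r"
    proof (intro exI allI impI)
      fix m n assume mn: "m \<ge> N" "n \<ge> N"
      have "d \<le> norm (x - (1/2::complex) *\<^sub>C (mm m + mm n))"
        using M(1) mmM by (intro dle complex_vector.subspace_scale complex_vector.subspace_add)
      hence "(dist (mm m) (mm n))\<^sup>2 \<le> (4 * d + 2) * (e m + e n)"
        unfolding dist_norm
        by (rule norm_diff_le_via_midpoint) (use d0 e0 in \<open>auto intro: less_imp_le[OF mmd] less_imp_le[OF e0(1)]\<close>)
      also have "\<dots> < (4 * d + 2) * (2 * \<delta>)"
        using N[OF mn(1)] N[OF mn(2)] d0 by (intro mult_strict_left_mono) auto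
      also have "\<dots> = r\<^sup>2" using d0 by (simp add: \<delta>_def field_simps)
      finally show "dist (mm m) (mm n) < r" using r by (simp add: power_less_imp_less_base)
    qed
  qed
  then obtain p where p: "mm \<longlonglongrightarrow> p" using Cauchy_convergent convergent_def by blast
  have "p \<in> M" using closed_sequentially[OF M(2)] mmM p by blast
  moreover have "norm (x - p) \<le> d"
  proof (rule LIMSEQ_le)
    show "(\<lambda>n. norm (x - mm n)) \<longlonglongrightarrow> norm (x - p)" by (intro tendsto_intros p)
    show "(\<lambda>n. d + e n) \<longlonglongrightarrow> d" using tendsto_add[OF tendsto_const e_lim] by simp
  qed (use mmd less_imp_le in auto)
  ultimately show ?thesis using that dle by force
qed

lemma orthogonal_projection_exists:
  fixes M :: "'a::chilbert set"
  assumes "csubspace M" "closed M"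
  obtains p where "p \<in> M" "\<And>m. m \<in> M \<Longrightarrow> cinner (x - p) m = 0"
  by (metis assms closed_csubspace_nearest_point nearest_point_orthogonal)

lemma Riesz_representation:
  fixes f :: "'a::chilbert \<Rightarrow> complex"
  assumes add: "\<And>x y. f (x + y) = f x + f y" and scale: "\<And>c x. f (c *\<^sub>C x) = c * f x"
    and bound: "\<And>x. cmod (f x) \<le> K * norm x"
  obtains z where "\<And>x. f x = cinner x z"
proof (cases "\<forall>x. f x = 0")
  case True
  thus ?thesis using that[of 0] by simp
next
  case False
  have fdiff: "f (x - y) = f x - f y" for x y
    using add[of x "- y"] scale[of "-1" y] by simp
  define N where "N = {x. f x = 0}"
  have "csubspace N" using add scale[of 0 0] by (auto simp: csubspace_def N_def scale)
  moreover have "closed N"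
  proof (unfold closed_sequential_limits, intro allI impI, elim conjE)
    fix s l assume s: "\<forall>n. s n \<in> N" and l: "s \<longlonglongrightarrow> l"
    have "(\<lambda>n. f (s n)) \<longlonglongrightarrow> f l" using bound fdiff l by (rule tendsto_bounded_additive)
    moreover have "(\<lambda>n. f (s n)) = (\<lambda>n. 0)" using s by (auto simp: N_def)
    ultimately show "l \<in> N" using LIMSEQ_unique tendsto_const by (metis N_def mem_Collect_eq)
  qed
  moreover obtain w where w: "f w \<noteq> 0" using False by blast
  ultimately obtain p where p: "p \<in> N" "\<And>m. m \<in> N \<Longrightarrow> cinner (w - p) m = 0"
    using orthogonal_projection_exists by blast
  \<comment> \<open>\<open>q\<close> spans the orthogonal complement of the kernel, so \<open>f\<close> is a multiple of \<open>cinner _ q\<close>.\<close>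
  define q where "q = w - p"
  have fq: "f q = f w" using p(1) by (simp add: q_def fdiff N_def)
  hence qq: "cinner q q \<noteq> 0" using w scale[of 0 0] by auto
  have "f x = cinner x (cnj (f q / cinner q q) *\<^sub>C q)" for x
  proof -
    define u where "u = x - (f x / f q) *\<^sub>C q"
    have "f u = 0" using fq w by (simp add: u_def fdiff scale)
    hence "cinner q u = 0" using p(2) by (simp add: q_def N_def)
    hence "cinner u q = 0" by (subst cinner_commute) simp
    hence "cinner x q = (f x / f q) * cinner q q" by (simp add: u_def cinner_diff_left cinner_scaleC_left)
    thus ?thesis using qq fq w by (simp add: cinner_scaleC_right)
  qed
  thus ?thesis by (rule that)
qed

lemma cinner_adj:
  fixes T :: "'a::chilbert \<Rightarrow> 'a"
  assumes T: "bounded_clinear_op T"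
  shows "cinner (T x) y = cinner x (adj UNIV T y)"
proof -
  obtain K where K: "K > 0" "\<And>x. norm (T x) \<le> K * norm x" using bounded_op_bound[OF T] by metis
  have "cmod (cinner (T a) y) \<le> K * norm y * norm a" for a
  proof -
    have "cmod (cinner (T a) y) \<le> norm (T a) * norm y" by (rule Cauchy_Schwarz_cinner)
    also have "\<dots> \<le> K * norm a * norm y" using K(2) by (simp add: mult_right_mono)
    finally show ?thesis by (simp add: algebra_simps)
  qed
  then obtain z where z: "\<And>x. cinner (T x) y = cinner x z"
    using Riesz_representation[of "\<lambda>x. cinner (T x) y"]
    by (metis bounded_op_add[OF T] bounded_op_scaleC[OF T] cinner_add_left cinner_scaleC_left)
  have "adj UNIV T y = z" by (rule adj_eqI[OF op_dense_UNIV]) (use z in auto)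
  thus ?thesis using z by simp
qed

lemma norm_adj_square_le:
  fixes T :: "'a::chilbert \<Rightarrow> 'a"
  assumes T: "bounded_clinear_op T"
  shows "(norm (adj UNIV T y))\<^sup>2 \<le> norm (T (adj UNIV T y)) * norm y"
proof -
  have "(norm (adj UNIV T y))\<^sup>2 = cmod (cinner (adj UNIV T y) (adj UNIV T y))"
    by (simp only: cinner_self norm_of_real) simp
  also have "\<dots> = cmod (cinner (T (adj UNIV T y)) y)" by (simp add: cinner_adj[OF T])
  also have "\<dots> \<le> norm (T (adj UNIV T y)) * norm y" by (rule Cauchy_Schwarz_cinner)
  finally show ?thesis .
qed

lemma bounded_op_adj:
  fixes T :: "'a::chilbert \<Rightarrow> 'a"
  assumes T: "bounded_clinear_op T"
  shows "bounded_clinear_op (adj UNIV T)"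
proof -
  let ?A = "adj UNIV T"
  obtain K where K: "K > 0" "\<And>x. norm (T x) \<le> K * norm x" using bounded_op_bound[OF T] by metis
  have "norm (?A y) \<le> K * norm y" for y
  proof -
    have "(norm (?A y))\<^sup>2 \<le> norm (T (?A y)) * norm y" by (rule norm_adj_square_le[OF T])
    also have "\<dots> \<le> K * norm (?A y) * norm y" using K(2) by (simp add: mult_right_mono)
    finally have "norm (?A y) * norm (?A y) \<le> (K * norm y) * norm (?A y)"
      by (simp add: power2_eq_square algebra_simps)
    thus ?thesis using K by (cases "?A y = 0") (auto simp: mult_le_cancel_right)
  qed
  thus ?thesis
    by (intro bounded_clinear_opI)
       (auto intro: cinner_eqI simp: cinner_adj[OF T, symmetric] cinner_add_right cinner_scaleC_right)
qed

lemma op_dense_if_orthogonal_trivial: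
  fixes S :: "'a::chilbert set"
  assumes S: "csubspace S" and orth: "\<And>y. (\<forall>x\<in>S. cinner x y = 0) \<Longrightarrow> y = 0"
  shows "op_dense cinner UNIV S"
proof -
  have "a \<in> closure S" for a
  proof -
    obtain p where p: "p \<in> closure S" "\<And>m. m \<in> closure S \<Longrightarrow> cinner (a - p) m = 0"
      using orthogonal_projection_exists[OF csubspace_closure[OF S] closed_closure] by blast
    have "\<forall>x\<in>S. cinner x (a - p) = 0"
      using p(2) closure_subset by (metis cinner_commute complex_cnj_zero subsetD)
    hence "a - p = 0" by (rule orth)
    thus ?thesis using p(1) by simp
  qed
  thus ?thesis unfolding op_dense_def ip_conv_cinner by (simp add: closure_sequential)
qed

section \<open>Compact operators\<close>

definition seq_compact_op :: "('a::complex_inner \<Rightarrow> 'a) \<Rightarrow> bool" where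
  "seq_compact_op T \<longleftrightarrow> (\<forall>(x::nat \<Rightarrow> 'a) B. (\<forall>n. norm (x n) \<le> B) \<longrightarrow>
     (\<exists>r. strict_mono r \<and> convergent (\<lambda>n. T (x (r n)))))"

lemma seq_compact_opD:
  fixes x :: "nat \<Rightarrow> 'a::complex_inner"
  assumes "seq_compact_op T" "\<And>n. norm (x n) \<le> B"
  obtains r where "strict_mono r" "convergent (\<lambda>n. T (x (r n)))"
  using assms(1)[unfolded seq_compact_op_def, rule_format, of x B] assms(2) by blast

lemma compact_op_imp_seq_compact_op:
  fixes T :: "'a::chilbert \<Rightarrow> 'a"
  assumes T: "compact_op T"
  shows "seq_compact_op T"
  unfolding seq_compact_op_def
proof (intro allI impI)
  fix x :: "nat \<Rightarrow> 'a" and B :: real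
  assume xB: "\<forall>n. norm (x n) \<le> B"
  have TT: "bounded_clinear_op T" using T by (simp add: compact_op_def)
  define c :: real where "c = \<bar>B\<bar> + 1"
  have c0: "c > 0" by (simp add: c_def)
  define y where "y n = complex_of_real (1 / c) *\<^sub>C x n" for n
  have yball: "y n \<in> ball 0 1" for n
  proof -
    have "norm (y n) = norm (x n) / c" using c0 by (simp add: y_def norm_scaleC norm_divide)
    also have "\<dots> \<le> B / c" using xB c0 by (simp add: divide_right_mono)
    also have "\<dots> < 1" using c0 by (simp add: c_def field_simps)
    finally show ?thesis by simp
  qed
  have sc: "seq_compact (closure (T ` ball 0 1))"
    using T by (simp add: compact_op_def compact_imp_seq_compact)
  have "\<forall>n. T (y n) \<in> closure (T ` ball 0 1)"
    using yball closure_subset by blast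
  then obtain l r where r: "strict_mono r" "((\<lambda>n. T (y n)) \<circ> r) \<longlonglongrightarrow> l"
    using sc[unfolded seq_compact_def, THEN spec[of _ "\<lambda>n. T (y n)"]] by blast
  have "x n = complex_of_real c *\<^sub>C y n" for n
    using c0 by (simp add: y_def flip: of_real_mult)
  hence "(\<lambda>n. T (x (r n))) = (\<lambda>n. complex_of_real c *\<^sub>C T (y (r n)))"
    by (simp add: bounded_op_scaleC[OF TT])
  moreover have "(\<lambda>n. complex_of_real c *\<^sub>C T (y (r n))) \<longlonglongrightarrow> complex_of_real c *\<^sub>C l"
    using r(2) by (intro tendsto_scaleC) (simp add: comp_def)
  ultimately have "(\<lambda>n. T (x (r n))) \<longlonglongrightarrow> complex_of_real c *\<^sub>C l" by simp
  hence "convergent (\<lambda>n. T (x (r n)))" unfolding convergent_def by blast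
  thus "\<exists>r. strict_mono r \<and> convergent (\<lambda>n. T (x (r n)))" using r(1) by blast
qed

lemma seq_compact_op_plus:
  assumes S: "seq_compact_op S" and T: "seq_compact_op T"
  shows "seq_compact_op (\<lambda>x. S x + T x)"
  unfolding seq_compact_op_def
proof (intro allI impI)
  fix x :: "nat \<Rightarrow> 'a" and B :: real
  assume xB: "\<forall>n. norm (x n) \<le> B"
  obtain r1 where r1: "strict_mono r1" "convergent (\<lambda>n. S (x (r1 n)))"
    by (rule seq_compact_opD[OF S, of x B]) (use xB in auto)
  obtain r2 where r2: "strict_mono r2" "convergent (\<lambda>n. T (x (r1 (r2 n))))"
    by (rule seq_compact_opD[OF T, of "\<lambda>n. x (r1 n)" B]) (use xB in auto)
  obtain a where "(\<lambda>n. S (x (r1 n))) \<longlonglongrightarrow> a" using r1(2) convergent_def by blast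
  hence a: "(\<lambda>n. S (x (r1 (r2 n)))) \<longlonglongrightarrow> a"
    using LIMSEQ_subseq_LIMSEQ[OF _ r2(1)] by (simp add: comp_def)
  obtain b where b: "(\<lambda>n. T (x (r1 (r2 n)))) \<longlonglongrightarrow> b" using r2(2) convergent_def by blast
  have "convergent (\<lambda>n. S (x ((r1 \<circ> r2) n)) + T (x ((r1 \<circ> r2) n)))"
    using tendsto_add[OF a b] unfolding convergent_def comp_def by blast
  moreover have "strict_mono (r1 \<circ> r2)" using r1(1) r2(1) by (rule strict_mono_o)
  ultimately show "\<exists>r. strict_mono r \<and> convergent (\<lambda>n. S (x (r n)) + T (x (r n)))" by blast
qed

lemma seq_compact_op_scaleC:
  assumes T: "seq_compact_op T"
  shows "seq_compact_op (\<lambda>x. c *\<^sub>C T x)"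
  unfolding seq_compact_op_def
proof (intro allI impI)
  fix x :: "nat \<Rightarrow> 'a" and B :: real
  assume xB: "\<forall>n. norm (x n) \<le> B"
  obtain r where r: "strict_mono r" "convergent (\<lambda>n. T (x (r n)))"
    by (rule seq_compact_opD[OF T, of x B]) (use xB in auto)
  then obtain a where "(\<lambda>n. T (x (r n))) \<longlonglongrightarrow> a" using convergent_def by blast
  hence "(\<lambda>n. c *\<^sub>C T (x (r n))) \<longlonglongrightarrow> c *\<^sub>C a" by (rule tendsto_scaleC)
  hence "convergent (\<lambda>n. c *\<^sub>C T (x (r n)))" unfolding convergent_def by blast
  thus "\<exists>r. strict_mono r \<and> convergent (\<lambda>n. c *\<^sub>C T (x (r n)))" using r(1) by blast
qed

lemma seq_compact_op_adj:
  fixes R :: "'a::chilbert \<Rightarrow> 'a"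
  assumes R: "bounded_clinear_op R" and cR: "seq_compact_op R"
  shows "seq_compact_op (adj UNIV R)"
  unfolding seq_compact_op_def
proof (intro allI impI)
  let ?A = "adj UNIV R"
  have A: "bounded_clinear_op ?A" by (rule bounded_op_adj[OF R])
  obtain K where K: "K > 0" "\<And>x. norm (?A x) \<le> K * norm x" using bounded_op_bound[OF A] by metis
  fix x :: "nat \<Rightarrow> 'a" and B :: real
  assume xB: "\<forall>n. norm (x n) \<le> B"
  have "norm (?A (x n)) \<le> K * B" for n
  proof -
    have "norm (?A (x n)) \<le> K * norm (x n)" by (rule K(2))
    also have "\<dots> \<le> K * B" using K(1) xB by (intro mult_left_mono) auto
    finally show ?thesis .
  qed
  then obtain r where r: "strict_mono r" "convergent (\<lambda>n. R (?A (x (r n))))"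
    by (rule seq_compact_opD[OF cR])
  define B' where "B' = 2 * \<bar>B\<bar> + 1"
  have B'0: "B' > 0" by (simp add: B'_def)
  \<comment> \<open>\<open>A\<close> maps the sequence to a Cauchy sequence because \<open>R A\<close> does.\<close>
  have key: "(dist (?A (x (r m))) (?A (x (r n))))\<^sup>2
      \<le> dist (R (?A (x (r m)))) (R (?A (x (r n)))) * B'" for m n
  proof -
    define d where "d = x (r m) - x (r n)"
    have nd: "norm d \<le> B'" using xB norm_triangle_ineq4[of "x (r m)" "x (r n)"]
      unfolding d_def B'_def by (smt (verit) abs_ge_self)
    have "(dist (?A (x (r m))) (?A (x (r n))))\<^sup>2 = (norm (?A d))\<^sup>2"
      by (simp add: dist_norm d_def bounded_op_diff[OF A])
    also have "\<dots> \<le> norm (R (?A d)) * norm d" by (rule norm_adj_square_le[OF R])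
    also have "\<dots> \<le> norm (R (?A d)) * B'" using nd by (simp add: mult_left_mono)
    also have "R (?A d) = R (?A (x (r m))) - R (?A (x (r n)))"
      by (simp add: d_def bounded_op_diff[OF A] bounded_op_diff[OF R])
    finally show ?thesis by (simp add: dist_norm)
  qed
  have "Cauchy (\<lambda>n. ?A (x (r n)))"
  proof (rule metric_CauchyI)
    fix e :: real assume e: "e > 0"
    hence "e\<^sup>2 / B' > 0" using B'0 by simp
    then obtain N where N: "\<And>m n. m \<ge> N \<Longrightarrow> n \<ge> N \<Longrightarrow>
        dist (R (?A (x (r m)))) (R (?A (x (r n)))) < e\<^sup>2 / B'"
      using convergent_Cauchy[OF r(2)] unfolding Cauchy_def by blast
    have "dist (?A (x (r m))) (?A (x (r n))) < e" if "m \<ge> N" "n \<ge> N" for m n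
    proof -
      have "(dist (?A (x (r m))) (?A (x (r n))))\<^sup>2 < e\<^sup>2 / B' * B'"
        using key[of m n] mult_strict_right_mono[OF N[OF that] B'0] by linarith
      thus ?thesis using e B'0 by (simp add: power_less_imp_less_base)
    qed
    thus "\<exists>N. \<forall>m\<ge>N. \<forall>n\<ge>N. dist (?A (x (r m))) (?A (x (r n))) < e" by blast
  qed
  thus "\<exists>r. strict_mono r \<and> convergent (\<lambda>n. ?A (x (r n)))"
    using r(1) Cauchy_convergent by blast
qed

lemma eigenvector_from_square_eigenvector:
  fixes T :: "'a::complex_vector \<Rightarrow> 'a"
  assumes T: "clinear_on UNIV T" and E: "csubspace E" and inv: "\<And>x. x \<in> E \<Longrightarrow> T x \<in> E"
    and v: "v \<in> E" "v \<noteq> 0" and TTv: "T (T v) = (c * c) *\<^sub>C v"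
  shows "\<exists>w\<in>E. w \<noteq> 0 \<and> (\<exists>t. T w = t *\<^sub>C w)"
proof (cases "T v + c *\<^sub>C v = 0")
  case True
  hence "T v = (- c) *\<^sub>C v" by (simp add: eq_neg_iff_add_eq_0)
  thus ?thesis using v by blast
next
  case False
  \<comment> \<open>\<open>(T - c)(T + c) v = 0\<close>\<close>
  have "T (T v + c *\<^sub>C v) = c *\<^sub>C (T v + c *\<^sub>C v)"
    using TTv T by (simp add: clinear_on_def complex_vector.scale_right_distrib add.commute)
  moreover have "T v + c *\<^sub>C v \<in> E"
    using E inv v by (simp add: complex_vector.subspace_add complex_vector.subspace_scale)
  ultimately show ?thesis using False by blast
qed

lemma restricted_op_norm:
  fixes T :: "'a::complex_inner \<Rightarrow> 'a"
  assumes T: "bounded_clinear_op T" and E: "csubspace E"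
  obtains c where "0 \<le> c" "\<And>x. x \<in> E \<Longrightarrow> norm (T x) \<le> c * norm x"
    "\<And>e. e > 0 \<Longrightarrow> \<exists>x\<in>E. norm x \<le> 1 \<and> c - e < norm (T x)"
proof -
  obtain K where K: "K > 0" "\<And>x. norm (T x) \<le> K * norm x" using bounded_op_bound[OF T] by metis
  define U where "U = {x \<in> E. norm x \<le> 1}"
  define c where "c = Sup ((\<lambda>x. norm (T x)) ` U)"
  have U0: "0 \<in> U" using E by (simp add: U_def complex_vector.subspace_0)
  have bdd: "bdd_above ((\<lambda>x. norm (T x)) ` U)"
  proof (rule bdd_aboveI2)
    fix x assume "x \<in> U"
    hence "K * norm x \<le> K * 1" using K(1) by (intro mult_left_mono) (auto simp: U_def)
    thus "norm (T x) \<le> K" using K(2)[of x] by linarith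
  qed
  have le_c: "norm (T x) \<le> c" if "x \<in> U" for x
    unfolding c_def using bdd that by (intro cSup_upper) auto
  have "0 \<le> c" using le_c[OF U0] norm_ge_zero order_trans by blast
  moreover have "norm (T x) \<le> c * norm x" if x: "x \<in> E" for x
  proof (cases "x = 0")
    case True thus ?thesis by (simp add: bounded_op_zero[OF T])
  next
    case False
    define u where "u = complex_of_real (1 / norm x) *\<^sub>C x"
    have "norm u = 1" using False by (simp add: u_def norm_scaleC norm_divide)
    hence "u \<in> U" using x E by (simp add: U_def u_def complex_vector.subspace_scale)
    moreover have "norm (T u) = norm (T x) / norm x"
      by (simp add: u_def bounded_op_scaleC[OF T] norm_scaleC norm_divide)
    ultimately have "norm (T x) / norm x \<le> c" using le_c by metis
    thus ?thesis using False by (simp add: divide_le_eq mult.commute)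
  qed
  moreover have "\<exists>x\<in>E. norm x \<le> 1 \<and> c - e < norm (T x)" if "e > 0" for e
  proof -
    have ne: "(\<lambda>x. norm (T x)) ` U \<noteq> {}" using U0 by blast
    have "c - e < Sup ((\<lambda>x. norm (T x)) ` U)" using that by (simp add: c_def)
    then obtain r where "r \<in> (\<lambda>x. norm (T x)) ` U" "c - e < r" using less_cSupD[OF ne] by blast
    thus ?thesis by (auto simp: U_def)
  qed
  ultimately show ?thesis using that by blast
qed

lemma self_adjoint_square_defect:
  fixes T :: "'a::complex_inner \<Rightarrow> 'a"
  assumes sa: "cinner (T (T x)) x = cinner (T x) (T x)"
    and bound: "norm (T (T x)) \<le> c * norm (T x)" and c: "0 \<le> c" and x: "norm x \<le> 1"
  shows "(norm (T (T x) - complex_of_real (c\<^sup>2) *\<^sub>C x))\<^sup>2 \<le> c\<^sup>2 * (c\<^sup>2 - (norm (T x))\<^sup>2)"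
proof -
  have "(norm (T (T x) - complex_of_real (c\<^sup>2) *\<^sub>C x))\<^sup>2
      = (norm (T (T x)))\<^sup>2 - 2 * Re (cnj (complex_of_real (c\<^sup>2)) * cinner (T (T x)) x)
        + (cmod (complex_of_real (c\<^sup>2)))\<^sup>2 * (norm x)\<^sup>2"
    by (rule norm_diff_scaleC_sq)
  also have "Re (cnj (complex_of_real (c\<^sup>2)) * cinner (T (T x)) x) = c\<^sup>2 * (norm (T x))\<^sup>2"
    unfolding sa cinner_self by simp
  also have "(cmod (complex_of_real (c\<^sup>2)))\<^sup>2 = c\<^sup>2 * c\<^sup>2"
    by (simp only: norm_of_real abs_power2) (simp add: power2_eq_square)
  finally have "(norm (T (T x) - complex_of_real (c\<^sup>2) *\<^sub>C x))\<^sup>2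
      = (norm (T (T x)))\<^sup>2 - 2 * (c\<^sup>2 * (norm (T x))\<^sup>2) + c\<^sup>2 * c\<^sup>2 * (norm x)\<^sup>2" .
  moreover have "(norm (T (T x)))\<^sup>2 \<le> c\<^sup>2 * (norm (T x))\<^sup>2"
    using power_mono[OF bound, of 2] by (simp add: power_mult_distrib)
  moreover have "c\<^sup>2 * c\<^sup>2 * (norm x)\<^sup>2 \<le> c\<^sup>2 * c\<^sup>2"
    using x by (simp add: mult_left_le power_le_one)
  ultimately show ?thesis by (simp add: algebra_simps)
qed

lemma limit_of_approximate_square_eigenvectors:
  fixes T :: "'a::complex_inner \<Rightarrow> 'a"
  assumes T: "bounded_clinear_op T" and E: "closed E" and xsE: "\<And>n. xs n \<in> E"
    and y: "(\<lambda>n. T (xs n)) \<longlonglongrightarrow> y" "y \<noteq> 0"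
    and defect: "(\<lambda>n. T (T (xs n)) - (c * c) *\<^sub>C xs n) \<longlonglongrightarrow> 0" and c: "c \<noteq> 0"
  shows "\<exists>v\<in>E. v \<noteq> 0 \<and> T (T v) = (c * c) *\<^sub>C v"
proof -
  define v where "v = (1 / (c * c)) *\<^sub>C T y"
  have "(\<lambda>n. T (T (xs n)) - (T (T (xs n)) - (c * c) *\<^sub>C xs n)) \<longlonglongrightarrow> T y - 0"
    by (intro tendsto_diff bounded_op_tendsto[OF T] y defect)
  hence "(\<lambda>n. (1 / (c * c)) *\<^sub>C ((c * c) *\<^sub>C xs n)) \<longlonglongrightarrow> v"
    unfolding v_def by (intro tendsto_scaleC) simp
  hence xs: "xs \<longlonglongrightarrow> v" using c by simp
  have "v \<in> E" using closed_sequentially[OF E _ xs] xsE by blast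
  moreover have Tv: "T v = y"
    using LIMSEQ_unique[OF bounded_op_tendsto[OF T xs] y(1)] .
  moreover have "T (T v) = (c * c) *\<^sub>C v" using c by (simp add: Tv) (simp add: v_def)
  moreover have "v \<noteq> 0" using Tv y(2) bounded_op_zero[OF T] by auto
  ultimately show ?thesis by blast
qed

lemma self_adjoint_approximate_square_eigenvectors:
  fixes T :: "'a::complex_inner \<Rightarrow> 'a"
  assumes sa: "\<And>x y. x \<in> E \<Longrightarrow> y \<in> E \<Longrightarrow> cinner (T x) y = cinner x (T y)"
    and inv: "\<And>x. x \<in> E \<Longrightarrow> T x \<in> E"
    and c: "0 \<le> c" "\<And>x. x \<in> E \<Longrightarrow> norm (T x) \<le> c * norm x"
    and xsE: "\<And>n. xs n \<in> E" and xs1: "\<And>n. norm (xs n) \<le> 1"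
    and Txs_lim: "(\<lambda>n. norm (T (xs n))) \<longlonglongrightarrow> c"
  shows "(\<lambda>n. T (T (xs n)) - (complex_of_real c * complex_of_real c) *\<^sub>C xs n) \<longlonglongrightarrow> 0"
proof -
  have defect_bound: "(norm (T (T (xs n)) - complex_of_real (c\<^sup>2) *\<^sub>C xs n))\<^sup>2
      \<le> c\<^sup>2 * (c\<^sup>2 - (norm (T (xs n)))\<^sup>2)" for n
    using self_adjoint_square_defect[OF sa[OF inv[OF xsE] xsE] c(2)[OF inv[OF xsE]] c(1) xs1] .
  have "(\<lambda>n. c\<^sup>2 * (c\<^sup>2 - (norm (T (xs n)))\<^sup>2)) \<longlonglongrightarrow> c\<^sup>2 * (c\<^sup>2 - c\<^sup>2)"
    using tendsto_mult[OF tendsto_const tendsto_diff[OF tendsto_const tendsto_power[OF Txs_lim]]] .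
  hence bound_lim: "(\<lambda>n. c\<^sup>2 * (c\<^sup>2 - (norm (T (xs n)))\<^sup>2)) \<longlonglongrightarrow> 0" by simp
  have "(\<lambda>n. (norm (T (T (xs n)) - complex_of_real (c\<^sup>2) *\<^sub>C xs n))\<^sup>2) \<longlonglongrightarrow> 0"
    by (rule tendsto_sandwich[of "\<lambda>n. 0" _ _ "\<lambda>n. c\<^sup>2 * (c\<^sup>2 - (norm (T (xs n)))\<^sup>2)"])
       (use defect_bound bound_lim in \<open>auto intro: always_eventually\<close>)
  hence "(\<lambda>n. norm (T (T (xs n)) - complex_of_real (c\<^sup>2) *\<^sub>C xs n)) \<longlonglongrightarrow> 0"
    using tendsto_real_sqrt by fastforce
  thus ?thesis by (simp add: tendsto_norm_zero_iff power2_eq_square)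
qed

lemma self_adjoint_seq_compact_op_eigenvector:
  fixes T :: "'a::chilbert \<Rightarrow> 'a"
  assumes T: "bounded_clinear_op T" and cT: "seq_compact_op T"
    and E: "csubspace E" "closed E" and v0: "v0 \<in> E" "v0 \<noteq> 0"
    and inv: "\<And>x. x \<in> E \<Longrightarrow> T x \<in> E"
    and sa: "\<And>x y. x \<in> E \<Longrightarrow> y \<in> E \<Longrightarrow> cinner (T x) y = cinner x (T y)"
  shows "\<exists>v\<in>E. v \<noteq> 0 \<and> (\<exists>t. T v = t *\<^sub>C v)"
proof -
  have lin: "clinear_on UNIV T" using T by (simp add: bounded_clinear_op_def)
  obtain c where c: "0 \<le> c" "\<And>x. x \<in> E \<Longrightarrow> norm (T x) \<le> c * norm x"
    and approx: "\<And>e. e > 0 \<Longrightarrow> \<exists>x\<in>E. norm x \<le> 1 \<and> c - e < norm (T x)"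
    using restricted_op_norm[OF T E(1)] by metis
  show ?thesis
  proof (cases "c = 0")
    case True
    hence "T v0 = 0 *\<^sub>C v0" using c(2)[OF v0(1)] by simp
    thus ?thesis using v0 by blast
  next
    case False
    \<comment> \<open>Approximate maximizers \<open>x\<^sub>n\<close> of \<open>\<parallel>T x\<parallel>\<close> on the unit ball of \<open>E\<close> are approximate eigenvectors
      of \<open>T\<^sup>2\<close> for the eigenvalue \<open>c\<^sup>2\<close>.\<close>
    define e :: "nat \<Rightarrow> real" where "e n = 1 / (real n + 1)" for n
    have "\<forall>n. \<exists>x\<in>E. norm x \<le> 1 \<and> c - e n < norm (T x)"
      by (intro allI approx) (simp add: e_def)
    then obtain xs where xsE: "\<And>n. xs n \<in> E" and xs1: "\<And>n. norm (xs n) \<le> 1"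
      and xsc: "\<And>n. c - e n < norm (T (xs n))"
      by metis
    have Txs_le: "norm (T (xs n)) \<le> c" for n
    proof -
      have "norm (T (xs n)) \<le> c * norm (xs n)" by (rule c(2)[OF xsE])
      also have "\<dots> \<le> c" using xs1[of n] c(1) by (simp add: mult_left_le)
      finally show ?thesis .
    qed
    have "e = (\<lambda>n. inverse (real (Suc n)))" by (auto simp: e_def inverse_eq_divide add.commute)
    hence "(\<lambda>n. c - e n) \<longlonglongrightarrow> c" using tendsto_diff[OF tendsto_const LIMSEQ_inverse_real_of_nat] by simp
    hence Txs_lim: "(\<lambda>n. norm (T (xs n))) \<longlonglongrightarrow> c"
      by (rule tendsto_sandwich[rotated 2])
         (auto intro!: always_eventually less_imp_le[OF xsc] Txs_le)
    have defect: "(\<lambda>n. T (T (xs n)) - (complex_of_real c * complex_of_real c) *\<^sub>C xs n) \<longlonglongrightarrow> 0"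
      by (rule self_adjoint_approximate_square_eigenvectors[OF sa inv c(1,2) xsE xs1 Txs_lim])
    obtain r where r: "strict_mono r" "convergent (\<lambda>n. T (xs (r n)))"
      by (rule seq_compact_opD[OF cT xs1])
    then obtain y where y: "(\<lambda>n. T (xs (r n))) \<longlonglongrightarrow> y" unfolding convergent_def by blast
    have "norm y = c"
      using LIMSEQ_unique[OF tendsto_norm[OF y] LIMSEQ_subseq_LIMSEQ[OF Txs_lim r(1), unfolded comp_def]] .
    hence "y \<noteq> 0" using False by auto
    then obtain v where "v \<in> E" "v \<noteq> 0" "T (T v) = (complex_of_real c * complex_of_real c) *\<^sub>C v"
      using limit_of_approximate_square_eigenvectors[OF T E(2) xsE y _
          LIMSEQ_subseq_LIMSEQ[OF defect r(1), unfolded comp_def]] False by auto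
    thus ?thesis using eigenvector_from_square_eigenvector[OF lin E(1) inv] by blast
  qed
qed

lemma eigenspace_closed_csubspace:
  fixes T :: "'a::complex_inner \<Rightarrow> 'a"
  assumes T: "bounded_clinear_op T" and M: "csubspace M" "closed M"
  shows "csubspace {x \<in> M. T x = t *\<^sub>C x}" and "closed {x \<in> M. T x = t *\<^sub>C x}"
proof -
  show "csubspace {x \<in> M. T x = t *\<^sub>C x}"
    using M(1) unfolding csubspace_def
    by (auto simp: bounded_op_zero[OF T] bounded_op_add[OF T] bounded_op_scaleC[OF T]
        complex_vector.scale_right_distrib mult.commute)
  show "closed {x \<in> M. T x = t *\<^sub>C x}"
    unfolding closed_sequential_limits
  proof (intro allI impI, elim conjE)
    fix s l assume s: "\<forall>n. s n \<in> {x \<in> M. T x = t *\<^sub>C x}" and l: "s \<longlonglongrightarrow> l"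
    have "l \<in> M" using closed_sequentially[OF M(2) _ l] s by auto
    moreover have "(\<lambda>n. T (s n)) \<longlonglongrightarrow> T l" by (rule bounded_op_tendsto[OF T l])
    moreover have "(\<lambda>n. T (s n)) = (\<lambda>n. t *\<^sub>C s n)" using s by auto
    ultimately show "l \<in> {x \<in> M. T x = t *\<^sub>C x}"
      using tendsto_scaleC[OF l, of t] LIMSEQ_unique by fastforce
  qed
qed

lemma commuting_self_adjoint_common_eigenvector:
  fixes H1 H2 :: "'a::chilbert \<Rightarrow> 'a"
  assumes H1: "bounded_clinear_op H1" "seq_compact_op H1" and H2: "bounded_clinear_op H2" "seq_compact_op H2"
    and sa1: "\<And>x y. cinner (H1 x) y = cinner x (H1 y)" and sa2: "\<And>x y. cinner (H2 x) y = cinner x (H2 y)"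
    and comm: "\<And>x. H1 (H2 x) = H2 (H1 x)"
    and M: "csubspace M" "closed M" "x0 \<in> M" "x0 \<noteq> 0"
    and inv1: "\<And>x. x \<in> M \<Longrightarrow> H1 x \<in> M" and inv2: "\<And>x. x \<in> M \<Longrightarrow> H2 x \<in> M"
  obtains w t s where "w \<in> M" "w \<noteq> 0" "H1 w = t *\<^sub>C w" "H2 w = s *\<^sub>C w"
proof -
  obtain v t where v: "v \<in> M" "v \<noteq> 0" "H1 v = t *\<^sub>C v"
    using self_adjoint_seq_compact_op_eigenvector[OF H1 M(1,2,3,4) inv1 sa1] by blast
  \<comment> \<open>\<open>H\<^sub>2\<close> leaves the eigenspace of \<open>H\<^sub>1\<close> invariant because the two commute.\<close>
  define E where "E = {x \<in> M. H1 x = t *\<^sub>C x}"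
  have E: "csubspace E" "closed E"
    unfolding E_def by (rule eigenspace_closed_csubspace[OF H1(1) M(1,2)])+
  have "H2 x \<in> E" if "x \<in> E" for x
    using that inv2 comm[of x] by (auto simp: E_def bounded_op_scaleC[OF H2(1)])
  moreover have "v \<in> E" using v by (simp add: E_def)
  ultimately obtain w s where "w \<in> E" "w \<noteq> 0" "H2 w = s *\<^sub>C w"
    using self_adjoint_seq_compact_op_eigenvector[OF H2 E _ v(2)] sa2 by blast
  thus ?thesis using that by (auto simp: E_def)
qed

lemma normal_seq_compact_op_eigenvector:
  fixes R :: "'a::chilbert \<Rightarrow> 'a"
  assumes R: "bounded_clinear_op R" "seq_compact_op R"
    and normal: "\<And>x. R (adj UNIV R x) = adj UNIV R (R x)"
    and M: "csubspace M" "closed M" "x0 \<in> M" "x0 \<noteq> 0"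
    and inv: "\<And>x. x \<in> M \<Longrightarrow> R x \<in> M" and inv_adj: "\<And>x. x \<in> M \<Longrightarrow> adj UNIV R x \<in> M"
  obtains w l where "w \<in> M" "w \<noteq> 0" "R w = l *\<^sub>C w"
proof -
  define R' where "R' = adj UNIV R"
  have R': "bounded_clinear_op R'" "seq_compact_op R'"
    unfolding R'_def using bounded_op_adj seq_compact_op_adj R by blast+
  have RR': "cinner (R x) y = cinner x (R' y)" for x y
    unfolding R'_def by (rule cinner_adj[OF R(1)])
  have R'R: "cinner (R' x) y = cinner x (R y)" for x y
    by (subst (1 2) cinner_commute) (simp add: RR')
  \<comment> \<open>Real and imaginary parts of \<open>R\<close>.\<close>
  define H1 where "H1 x = (1/2::complex) *\<^sub>C (R x + R' x)" for x
  define H2 where "H2 x = (- \<i>/2) *\<^sub>C (R x + (-1) *\<^sub>C R' x)" for x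
  have H1: "bounded_clinear_op H1" "seq_compact_op H1"
    unfolding H1_def[abs_def]
    by (intro bounded_op_scaleC_left bounded_op_plus seq_compact_op_scaleC seq_compact_op_plus R R')+
  have H2: "bounded_clinear_op H2" "seq_compact_op H2"
    unfolding H2_def[abs_def]
    by (intro bounded_op_scaleC_left bounded_op_plus seq_compact_op_scaleC seq_compact_op_plus R R')+
  have "cinner (H1 x) y = cinner x (H1 y)" "cinner (H2 x) y = cinner x (H2 y)" for x y
    by (simp_all add: H1_def H2_def cinner_simps RR' R'R algebra_simps)
  moreover have "H1 (H2 x) = H2 (H1 x)" for x
    using normal[of x]
    by (simp add: H1_def H2_def R'_def bounded_op_add[OF R(1)] bounded_op_add[OF R'(1), unfolded R'_def]
        bounded_op_diff[OF R(1)] bounded_op_diff[OF R'(1), unfolded R'_def]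
        bounded_op_scaleC[OF R(1)] bounded_op_scaleC[OF R'(1), unfolded R'_def]
        complex_vector.scale_right_distrib complex_vector.scale_right_diff_distrib algebra_simps)
  moreover have "H1 x \<in> M" "H2 x \<in> M" if "x \<in> M" for x
    unfolding H1_def H2_def R'_def using M(1) inv[OF that] inv_adj[OF that]
    by (simp_all add: complex_vector.subspace_add complex_vector.subspace_diff
        complex_vector.subspace_neg complex_vector.subspace_scale)
  ultimately obtain w t s where w: "w \<in> M" "w \<noteq> 0" "H1 w = t *\<^sub>C w" "H2 w = s *\<^sub>C w"
    by (rule commuting_self_adjoint_common_eigenvector[OF H1 H2 _ _ _ M])
  have "R w = H1 w + \<i> *\<^sub>C H2 w"
    by (simp add: H1_def H2_def complex_vector.scale_right_distrib algebra_simps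
        flip: complex_vector.scale_left_distrib)
  hence "R w = (t + \<i> * s) *\<^sub>C w" by (simp add: w(3,4) complex_vector.scale_left_distrib)
  thus ?thesis using that w(1,2) by blast
qed

section \<open>Resolvents of self-adjoint operators\<close>

lemma clinear_on_add: "clinear_on S T \<Longrightarrow> x \<in> S \<Longrightarrow> y \<in> S \<Longrightarrow> T (x + y) = T x + T y"
  and clinear_on_scaleC: "clinear_on S T \<Longrightarrow> x \<in> S \<Longrightarrow> T (c *\<^sub>C x) = c *\<^sub>C T x"
  and clinear_on_csubspace: "clinear_on S T \<Longrightarrow> csubspace S"
  by (simp_all add: clinear_on_def)

lemma clinear_on_diff:
  assumes T: "clinear_on S T" and x: "x \<in> S" and y: "y \<in> S"
  shows "T (x - y) = T x - T y"
  using clinear_on_add[OF T x, of "(-1) *\<^sub>C y"] clinear_on_scaleC[OF T y, of "-1"]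
    complex_vector.subspace_scale[OF clinear_on_csubspace[OF T] y, of "-1"]
  by simp

lemma self_adjoint_op_symmetric:
  assumes sa: "self_adjoint_op S D" and a: "a \<in> S" and b: "b \<in> S"
  shows "cinner (D a) b = cinner a (D b)"
proof -
  have dense: "op_dense cinner UNIV S" and adj: "adj_dom S D = S" "\<And>y. y \<in> S \<Longrightarrow> adj S D y = D y"
    using sa by (auto simp: self_adjoint_op_def)
  obtain z where z: "\<forall>u\<in>S. cinner (D u) b = cinner u z" using b adj(1) by (auto simp: adj_dom_def)
  have "z = D b" using adj_eqI[OF dense z] adj(2)[OF b] by simp
  thus ?thesis using z a by simp
qed

lemma self_adjoint_op_eigenvalue_real:
  assumes sa: "self_adjoint_op S D" and a: "a \<in> S" "a \<noteq> 0" and Da: "D a = \<nu> *\<^sub>C a"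
  shows "cnj \<nu> = \<nu>"
proof -
  have "\<nu> * cinner a a = cnj \<nu> * cinner a a"
    using self_adjoint_op_symmetric[OF sa a(1) a(1)] unfolding Da cinner_scaleC_left cinner_scaleC_right .
  thus ?thesis using a(2) by (metis cinner_eq_zero_iff mult_cancel_right)
qed

locale self_adjoint_resolvent =
  fixes S :: "'a::chilbert set" and D R :: "'a \<Rightarrow> 'a" and \<mu> :: complex
  assumes self_adjoint: "self_adjoint_op S D"
    and R_bounded: "bounded_clinear_op R"
    and R_in_dom: "\<And>y. R y \<in> S"
    and R_right_inverse: "\<And>y. D (R y) - \<mu> *\<^sub>C R y = y"
    and R_left_inverse: "\<And>x. x \<in> S \<Longrightarrow> R (D x - \<mu> *\<^sub>C x) = x"
begin

lemma D_linear: "clinear_on S D"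
  using self_adjoint by (simp add: self_adjoint_op_def)

lemma dom_csubspace: "csubspace S"
  by (rule clinear_on_csubspace[OF D_linear])

lemma D_R: "D (R y) = y + \<mu> *\<^sub>C R y"
  using R_right_inverse[of y] by (simp add: algebra_simps)

lemma adj_R_in_dom: "adj UNIV R v \<in> S"
  and D_adj_R: "D (adj UNIV R v) = v + cnj \<mu> *\<^sub>C adj UNIV R v"
proof -
  let ?R' = "adj UNIV R"
  have dense: "op_dense cinner UNIV S" and adj: "adj_dom S D = S" "\<And>y. y \<in> S \<Longrightarrow> adj S D y = D y"
    using self_adjoint by (auto simp: self_adjoint_op_def)
  have eq: "\<forall>a\<in>S. cinner (D a) (?R' v) = cinner a (v + cnj \<mu> *\<^sub>C ?R' v)"
  proof
    fix a assume a: "a \<in> S"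
    have "R (D a) = R (D a - \<mu> *\<^sub>C a) + R (\<mu> *\<^sub>C a)"
      by (simp add: bounded_op_add[OF R_bounded, symmetric])
    also have "\<dots> = a + \<mu> *\<^sub>C R a" using R_left_inverse[OF a] by (simp add: bounded_op_scaleC[OF R_bounded])
    finally have "cinner (D a) (?R' v) = cinner (a + \<mu> *\<^sub>C R a) v"
      by (simp add: cinner_adj[OF R_bounded, symmetric])
    thus "cinner (D a) (?R' v) = cinner a (v + cnj \<mu> *\<^sub>C ?R' v)"
      by (simp add: cinner_simps cinner_adj[OF R_bounded])
  qed
  hence "?R' v \<in> adj_dom S D" by (auto simp: adj_dom_def)
  thus inS: "?R' v \<in> S" using adj(1) by simp
  show "D (?R' v) = v + cnj \<mu> *\<^sub>C ?R' v" using adj_eqI[OF dense eq] adj(2)[OF inS] by simp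
qed

lemma shift_injective: "a \<in> S \<Longrightarrow> D a - \<mu> *\<^sub>C a = 0 \<Longrightarrow> a = 0"
  using R_left_inverse bounded_op_zero[OF R_bounded] by metis

lemma conj_shift_injective:
  assumes a: "a \<in> S" "D a - cnj \<mu> *\<^sub>C a = 0"
  shows "a = 0"
proof (rule ccontr)
  assume "a \<noteq> 0"
  hence "cnj \<mu> = \<mu>"
    using self_adjoint_op_eigenvalue_real[OF self_adjoint a(1), of "cnj \<mu>"] a(2) by simp
  thus False using shift_injective a \<open>a \<noteq> 0\<close> by simp
qed

lemma resolvent_identity:
  "R v - adj UNIV R v = (\<mu> - cnj \<mu>) *\<^sub>C adj UNIV R (R v)"
  "R v - adj UNIV R v = (\<mu> - cnj \<mu>) *\<^sub>C R (adj UNIV R v)"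
proof -
  let ?R' = "adj UNIV R" and ?k = "\<mu> - cnj \<mu>"
  have dom: "R w \<in> S" "?R' w \<in> S" for w by (simp_all add: R_in_dom adj_R_in_dom)
  have lin: "D (x - y - ?k *\<^sub>C z) = D x - D y - ?k *\<^sub>C D z" if "x \<in> S" "y \<in> S" "z \<in> S" for x y z
    using that dom_csubspace
    by (simp add: clinear_on_diff[OF D_linear] clinear_on_scaleC[OF D_linear]
        complex_vector.subspace_diff complex_vector.subspace_scale)
  have mem: "x - y - ?k *\<^sub>C z \<in> S" if "x \<in> S" "y \<in> S" "z \<in> S" for x y z
    using that dom_csubspace by (simp add: complex_vector.subspace_diff complex_vector.subspace_scale)
  define A1 where "A1 = R v - ?R' v - ?k *\<^sub>C ?R' (R v)"
  have "D A1 = (v + \<mu> *\<^sub>C R v) - (v + cnj \<mu> *\<^sub>C ?R' v) - ?k *\<^sub>C (R v + cnj \<mu> *\<^sub>C ?R' (R v))"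
    unfolding A1_def by (simp only: lin[OF dom(1) dom(2) dom(2)] D_R D_adj_R)
  hence "D A1 - cnj \<mu> *\<^sub>C A1 = 0"
    by (simp add: A1_def complex_vector.scale_right_distrib
        complex_vector.scale_right_diff_distrib algebra_simps)
  thus "R v - ?R' v = ?k *\<^sub>C ?R' (R v)"
    using conj_shift_injective[OF mem[OF dom(1) dom(2) dom(2)]] by (simp add: A1_def)
  define A2 where "A2 = R v - ?R' v - ?k *\<^sub>C R (?R' v)"
  have "D A2 = (v + \<mu> *\<^sub>C R v) - (v + cnj \<mu> *\<^sub>C ?R' v) - ?k *\<^sub>C (?R' v + \<mu> *\<^sub>C R (?R' v))"
    unfolding A2_def by (simp only: lin[OF dom(1) dom(2) dom(1)] D_R D_adj_R)
  hence "D A2 - \<mu> *\<^sub>C A2 = 0"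
    by (simp add: A2_def complex_vector.scale_right_distrib
        complex_vector.scale_right_diff_distrib algebra_simps)
  thus "R v - ?R' v = ?k *\<^sub>C R (?R' v)"
    using shift_injective[OF mem[OF dom(1) dom(2) dom(1)]] by (simp add: A2_def)
qed

lemma normal: "R (adj UNIV R v) = adj UNIV R (R v)"
proof (cases "\<mu> = cnj \<mu>")
  case True
  hence "R w = adj UNIV R w" for w using resolvent_identity(1)[of w] by simp
  thus ?thesis by simp
next
  case False
  thus ?thesis using resolvent_identity[of v] by simp
qed


lemma D_zero: "D 0 = 0"
  using clinear_on_scaleC[OF D_linear complex_vector.subspace_0[OF dom_csubspace], of 0] by simp

lemma R_eigenvector:
  assumes w: "R w = l *\<^sub>C w" "w \<noteq> 0"
  shows "w \<in> S" and "D w = (1 / l + \<mu>) *\<^sub>C w"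
proof -
  have "l \<noteq> 0"
  proof
    assume "l = 0"
    hence "w = D 0 - \<mu> *\<^sub>C 0" using R_right_inverse[of w] w(1) by simp
    thus False using w(2) D_zero by simp
  qed
  hence "w = (1 / l) *\<^sub>C R w" using w(1) by simp
  thus wS: "w \<in> S" using complex_vector.subspace_scale[OF dom_csubspace R_in_dom] by metis
  have "l *\<^sub>C D w = w + \<mu> *\<^sub>C (l *\<^sub>C w)"
    using D_R[of w] by (simp add: w(1) clinear_on_scaleC[OF D_linear wS])
  hence "(1 / l) *\<^sub>C (l *\<^sub>C D w) = (1 / l) *\<^sub>C (w + \<mu> *\<^sub>C (l *\<^sub>C w))" by simp
  thus "D w = (1 / l + \<mu>) *\<^sub>C w"
    using \<open>l \<noteq> 0\<close> by (simp add: complex_vector.scale_right_distrib complex_vector.scale_left_distrib)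
qed

end

section \<open>Admissible pairs\<close>

locale admissible_pair =
  fixes domD :: "'h::chilbert set" and D V :: "'h \<Rightarrow> 'h" and \<phi>0 :: 'h
  assumes admissible: "admissible domD D V"
    and phi0: "\<phi>0 \<in> domD" "D \<phi>0 = 0" "\<phi>0 \<noteq> 0"
begin

lemma D_linear: "clinear_on domD D"
  and domD_dense: "op_dense cinner UNIV domD"
  and V_bounded: "bounded_clinear_op V"
  and V_spectrum: "bspectrum V = {0}"
  and V_in_domD: "V x \<in> domD"
  and D_V: "D (V x) = x"
  and kernel_D: "\<exists>\<phi>. \<phi> \<noteq> 0 \<and> {x\<in>domD. D x = 0} = range (\<lambda>c. c *\<^sub>C \<phi>)"
  and self_adjoint_restriction: "\<exists>S. S \<subseteq> domD \<and> self_adjoint_op S D \<and> has_compact_resolvent S D"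
  using admissible by (auto simp: admissible_def compact_op_def)

lemma domD_csubspace: "csubspace domD"
  by (rule clinear_on_csubspace[OF D_linear])

lemmas D_add = clinear_on_add[OF D_linear]
  and D_scaleC = clinear_on_scaleC[OF D_linear]
  and D_diff = clinear_on_diff[OF D_linear]

lemma I_minus_V_invertible:
  obtains S where "bounded_clinear_op S" "\<And>w. S w - \<mu> *\<^sub>C V (S w) = w" "\<And>x. S (x - \<mu> *\<^sub>C V x) = x"
proof (cases "\<mu> = 0")
  case True
  thus ?thesis using that[OF bounded_op_ident] by simp
next
  case False
  \<comment> \<open>\<open>I - \<mu>V = -\<mu> (V - \<mu>\<^sup>-\<^sup>1 I)\<close>, and \<open>\<mu>\<^sup>-\<^sup>1\<close> is not in the spectrum of \<open>V\<close>.\<close>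
  have "1 / \<mu> \<notin> bspectrum V" using V_spectrum False by simp
  then obtain R where R: "bounded_clinear_op R" "\<And>x. R (V x - (1 / \<mu>) *\<^sub>C x) = x"
      "\<And>y. V (R y) - (1 / \<mu>) *\<^sub>C R y = y"
    unfolding bspectrum_def by blast
  define S where "S w = R ((- 1 / \<mu>) *\<^sub>C w)" for w
  have "bounded_clinear_op S"
    unfolding S_def by (rule bounded_op_compose[OF R(1) bounded_op_scaleC_left[OF bounded_op_ident]])
  moreover have "S w - \<mu> *\<^sub>C V (S w) = w" for w
  proof -
    have "S w - \<mu> *\<^sub>C V (S w) = (- \<mu>) *\<^sub>C (V (S w) - (1 / \<mu>) *\<^sub>C S w)"
      using False by (simp add: complex_vector.scale_right_diff_distrib)
    also have "\<dots> = w" using R(3) False by (simp add: S_def)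
    finally show ?thesis .
  qed
  moreover have "S (x - \<mu> *\<^sub>C V x) = x" for x
  proof -
    have "(- 1 / \<mu>) *\<^sub>C (x - \<mu> *\<^sub>C V x) = V x - (1 / \<mu>) *\<^sub>C x"
      using False by (simp add: complex_vector.scale_right_diff_distrib)
    thus ?thesis using R(2) by (simp add: S_def)
  qed
  ultimately show ?thesis by (rule that)
qed

lemma I_minus_V_inj:
  assumes "x - \<mu> *\<^sub>C V x = y - \<mu> *\<^sub>C V y"
  shows "x = y"
proof -
  obtain S where "bounded_clinear_op S" "\<And>w. S w - \<mu> *\<^sub>C V (S w) = w" "\<And>x. S (x - \<mu> *\<^sub>C V x) = x"
    using I_minus_V_invertible[of \<mu>] by blast
  thus ?thesis using arg_cong[OF assms, of S] by simp
qed

lemma phi_equation: "phi V \<phi>0 \<mu> - \<mu> *\<^sub>C V (phi V \<phi>0 \<mu>) = \<phi>0"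
proof -
  obtain S where S: "bounded_clinear_op S" "\<And>w. S w - \<mu> *\<^sub>C V (S w) = w"
    "\<And>x. S (x - \<mu> *\<^sub>C V x) = x"
    using I_minus_V_invertible[of \<mu>] by blast
  have "phi V \<phi>0 \<mu> = S \<phi>0"
    unfolding phi_def by (rule the_equality) (use S in \<open>auto intro: I_minus_V_inj\<close>)
  thus ?thesis using S by simp
qed

lemma phi_unique: "y - \<mu> *\<^sub>C V y = \<phi>0 \<Longrightarrow> y = phi V \<phi>0 \<mu>"
  using I_minus_V_inj[of y \<mu> "phi V \<phi>0 \<mu>"] phi_equation[of \<mu>] by simp

lemma phi_0: "phi V \<phi>0 0 = \<phi>0"
  using phi_unique[of \<phi>0 0] by simp

lemma phi_nonzero: "phi V \<phi>0 \<mu> \<noteq> 0"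
  using phi_equation[of \<mu>] phi0(3) bounded_op_zero[OF V_bounded] by auto

lemma phi_in_domD: "phi V \<phi>0 \<mu> \<in> domD"
  and D_phi: "D (phi V \<phi>0 \<mu>) = \<mu> *\<^sub>C phi V \<phi>0 \<mu>"
proof -
  let ?p = "phi V \<phi>0 \<mu>"
  have p: "?p = \<phi>0 + \<mu> *\<^sub>C V ?p" using phi_equation[of \<mu>] by (simp add: algebra_simps)
  have v: "\<mu> *\<^sub>C V ?p \<in> domD" using domD_csubspace V_in_domD by (rule complex_vector.subspace_scale)
  show "?p \<in> domD" using complex_vector.subspace_add[OF domD_csubspace phi0(1) v] p by simp
  have "D ?p = D \<phi>0 + D (\<mu> *\<^sub>C V ?p)" by (subst p) (rule D_add[OF phi0(1) v])
  also have "\<dots> = \<mu> *\<^sub>C ?p" using phi0(2) by (simp add: D_scaleC[OF V_in_domD] D_V)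
  finally show "D ?p = \<mu> *\<^sub>C ?p" .
qed

lemma eigenvector_D_eq_multiple_phi:
  assumes y: "y \<in> domD" and Dy: "D y = \<nu> *\<^sub>C y"
  obtains k where "y = k *\<^sub>C phi V \<phi>0 \<nu>"
proof -
  obtain \<phi> where \<phi>: "{x\<in>domD. D x = 0} = range (\<lambda>c. c *\<^sub>C \<phi>)" using kernel_D by blast
  obtain c0 where c0: "\<phi>0 = c0 *\<^sub>C \<phi>" using \<phi> phi0 by blast
  have "c0 \<noteq> 0" using c0 phi0(3) by auto
  \<comment> \<open>\<open>(I - \<nu>V) y\<close> lies in the one-dimensional kernel of \<open>D\<close>, hence is a multiple of \<open>\<phi>\<^sub>0\<close>.\<close>
  have vd: "\<nu> *\<^sub>C V y \<in> domD" using domD_csubspace V_in_domD by (rule complex_vector.subspace_scale)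
  have "y - \<nu> *\<^sub>C V y \<in> domD" using complex_vector.subspace_diff[OF domD_csubspace y vd] .
  moreover have "D (y - \<nu> *\<^sub>C V y) = 0" using Dy by (simp add: D_diff[OF y vd] D_scaleC[OF V_in_domD] D_V)
  ultimately obtain c where "y - \<nu> *\<^sub>C V y = c *\<^sub>C \<phi>" using \<phi> by blast
  also have "\<dots> = (c / c0) *\<^sub>C \<phi>0" using \<open>c0 \<noteq> 0\<close> by (simp add: c0)
  also have "\<dots> = (c / c0) *\<^sub>C phi V \<phi>0 \<nu> - \<nu> *\<^sub>C V ((c / c0) *\<^sub>C phi V \<phi>0 \<nu>)"
    by (subst phi_equation[of \<nu>, symmetric])
       (simp add: complex_vector.scale_right_diff_distrib bounded_op_scaleC[OF V_bounded] mult.commute)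
  finally show ?thesis using I_minus_V_inj that by blast
qed

lemma phi_Lipschitz_near:
  obtains C \<delta> where "\<delta> > 0" "\<And>l. cmod (l - \<mu>0) < \<delta> \<Longrightarrow> norm (phi V \<phi>0 l - phi V \<phi>0 \<mu>0) \<le> C * cmod (l - \<mu>0)"
proof -
  obtain S where S: "bounded_clinear_op S" "\<And>w. S w - \<mu>0 *\<^sub>C V (S w) = w"
    "\<And>x. S (x - \<mu>0 *\<^sub>C V x) = x"
    using I_minus_V_invertible[of \<mu>0] by blast
  obtain CS where CS: "CS > 0" "\<And>x. norm (S x) \<le> CS * norm x" using bounded_op_bound[OF S(1)] by metis
  obtain KV where KV: "KV > 0" "\<And>x. norm (V x) \<le> KV * norm x" using bounded_op_bound[OF V_bounded] by metis
  define p where "p = phi V \<phi>0 \<mu>0"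
  have "norm (phi V \<phi>0 l - p) \<le> (2 * CS * KV * norm p) * cmod (l - \<mu>0)"
    if l: "cmod (l - \<mu>0) < 1 / (2 * CS * KV)" for l
  proof -
    define d where "d = phi V \<phi>0 l - p"
    define a where "a = CS * KV * cmod (l - \<mu>0)"
    have a: "0 \<le> a" "a \<le> 1 / 2" using l CS(1) KV(1) by (auto simp: a_def field_simps)
    have "d - \<mu>0 *\<^sub>C V d = (phi V \<phi>0 l - \<mu>0 *\<^sub>C V (phi V \<phi>0 l)) - (p - \<mu>0 *\<^sub>C V p)"
      by (simp add: d_def bounded_op_diff[OF V_bounded] complex_vector.scale_right_diff_distrib)
    also have "p - \<mu>0 *\<^sub>C V p = phi V \<phi>0 l - l *\<^sub>C V (phi V \<phi>0 l)"
      by (simp add: p_def phi_equation)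
    finally have "d - \<mu>0 *\<^sub>C V d = (l - \<mu>0) *\<^sub>C V (phi V \<phi>0 l)"
      by (simp add: complex_vector.scale_left_diff_distrib)
    hence "norm d \<le> CS * (cmod (l - \<mu>0) * norm (V (phi V \<phi>0 l)))"
      using CS(2)[of "d - \<mu>0 *\<^sub>C V d"] S(3)[of d] by (simp add: norm_scaleC)
    also have "\<dots> \<le> CS * (cmod (l - \<mu>0) * (KV * (norm p + norm d)))"
      using CS(1) KV norm_triangle_ineq[of p d]
      by (intro mult_left_mono order_trans[OF KV(2)]) (auto simp: d_def)
    also have "\<dots> = a * norm p + a * norm d" by (simp add: a_def algebra_simps)
    finally have "norm d \<le> 2 * a * norm p"
      using mult_right_mono[OF a(2), of "norm d"] by simp
    thus ?thesis by (simp add: d_def a_def mult_ac)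
  qed
  moreover have "1 / (2 * CS * KV) > 0" using CS(1) KV(1) by simp
  ultimately show ?thesis using that unfolding p_def by blast
qed

lemma isCont_phi: "isCont (phi V \<phi>0) \<mu>0"
proof -
  obtain C \<delta> where \<delta>: "\<delta> > 0"
    and C: "\<And>l. cmod (l - \<mu>0) < \<delta> \<Longrightarrow> norm (phi V \<phi>0 l - phi V \<phi>0 \<mu>0) \<le> C * cmod (l - \<mu>0)"
    using phi_Lipschitz_near[of \<mu>0] by blast
  have lim0: "((\<lambda>l. cmod (l - \<mu>0)) \<longlongrightarrow> 0) (at \<mu>0)"
    using tendsto_norm[OF tendsto_diff[OF tendsto_ident_at[of \<mu>0 UNIV] tendsto_const[of \<mu>0]]] by simp
  have "((\<lambda>l. phi V \<phi>0 l - phi V \<phi>0 \<mu>0) \<longlongrightarrow> 0) (at \<mu>0)"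
  proof (rule Lim_null_comparison)
    show "\<forall>\<^sub>F l in at \<mu>0. norm (phi V \<phi>0 l - phi V \<phi>0 \<mu>0) \<le> C * cmod (l - \<mu>0)"
      using order_tendstoD(2)[OF lim0 \<delta>] by (rule eventually_mono) (rule C)
    show "((\<lambda>l. C * cmod (l - \<mu>0)) \<longlongrightarrow> 0) (at \<mu>0)"
      using tendsto_mult_left[OF lim0, of C] by simp
  qed
  thus ?thesis unfolding isCont_def by (simp add: LIM_zero_iff)
qed

end


lemma backward_shift_eqI:
  assumes quotient: "\<And>z. z \<noteq> 0 \<Longrightarrow> h z = (g z - g 0) / z" and h: "isCont h 0"
  shows "backward_shift g = h"
proof
  fix z
  show "backward_shift g z = h z"
  proof (cases "z = 0")
    case True
    have "((\<lambda>y. (g y - g 0) / (y - 0)) \<longlongrightarrow> h 0) (at 0)"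
    proof (rule Lim_transform_eventually[OF h[unfolded isCont_def]])
      show "\<forall>\<^sub>F y in at 0. h y = (g y - g 0) / (y - 0)"
        using quotient by (auto simp: eventually_at_filter)
    qed
    hence "deriv g 0 = h 0" by (simp add: has_field_derivative_iff DERIV_imp_deriv)
    thus ?thesis using True by (simp add: backward_shift_def)
  qed (simp add: backward_shift_def quotient)
qed

lemma backward_shift_Mz: "isCont f 0 \<Longrightarrow> backward_shift (Mz f) = f"
  by (rule backward_shift_eqI) (simp_all add: Mz_def)

context admissible_pair
begin

lemma gft_add: "gft V \<phi>0 (a + b) = gft V \<phi>0 a + gft V \<phi>0 b"
  and gft_diff: "gft V \<phi>0 (a - b) = gft V \<phi>0 a - gft V \<phi>0 b"
  and gft_scaleC: "gft V \<phi>0 (c *\<^sub>C a) = (\<lambda>\<mu>. c * gft V \<phi>0 a \<mu>)"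
  by (simp_all add: fun_eq_iff gft_def cinner_simps)

lemma isCont_gft: "isCont (gft V \<phi>0 x) \<mu>0"
proof -
  have "((\<lambda>\<mu>. phi V \<phi>0 (cnj \<mu>)) \<longlongrightarrow> phi V \<phi>0 (cnj \<mu>0)) (at \<mu>0)"
    by (rule isCont_tendsto_compose[OF isCont_phi]) (intro tendsto_intros)
  thus ?thesis unfolding isCont_def gft_def by (intro tendsto_cinner tendsto_const)
qed

lemma gft_adj_V: "gft V \<phi>0 (adj UNIV V x) = backward_shift (gft V \<phi>0 x)"
proof (rule backward_shift_eqI[symmetric])
  fix \<mu> :: complex assume "\<mu> \<noteq> 0"
  let ?p = "phi V \<phi>0 (cnj \<mu>)"
  have "V ?p = (1 / cnj \<mu>) *\<^sub>C (cnj \<mu> *\<^sub>C V ?p)" using \<open>\<mu> \<noteq> 0\<close> by simp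
  also have "cnj \<mu> *\<^sub>C V ?p = ?p - \<phi>0" using phi_equation[of "cnj \<mu>"] by (simp add: algebra_simps)
  finally have "V ?p = (1 / cnj \<mu>) *\<^sub>C (?p - \<phi>0)" .
  hence "cinner x (V ?p) = (gft V \<phi>0 x \<mu> - gft V \<phi>0 x 0) / \<mu>"
    by (simp add: gft_def phi_0 cinner_simps divide_inverse mult.commute)
  moreover have "gft V \<phi>0 (adj UNIV V x) \<mu> = cnj (cinner (V ?p) x)"
    unfolding gft_def by (subst cinner_commute) (simp add: cinner_adj[OF V_bounded])
  moreover have "cnj (cinner (V ?p) x) = cinner x (V ?p)" by (simp flip: cinner_commute)
  ultimately show "gft V \<phi>0 (adj UNIV V x) \<mu> = (gft V \<phi>0 x \<mu> - gft V \<phi>0 x 0) / \<mu>" by simp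
qed (rule isCont_gft)

lemma gft_adj_D:
  assumes x: "x \<in> adj_dom domD D"
  shows "gft V \<phi>0 x \<in> Mz_dom V \<phi>0" and "gft V \<phi>0 (adj domD D x) = Mz (gft V \<phi>0 x)"
proof -
  obtain z where z: "\<forall>y\<in>domD. cinner (D y) x = cinner y z" using x by (auto simp: adj_dom_def)
  have adj: "adj domD D x = z" by (rule adj_eqI[OF domD_dense z])
  have "gft V \<phi>0 z \<mu> = Mz (gft V \<phi>0 x) \<mu>" for \<mu>
  proof -
    let ?p = "phi V \<phi>0 (cnj \<mu>)"
    have "cinner z ?p = cnj (cinner ?p z)" by (rule cinner_commute)
    also have "cinner ?p z = cinner (D ?p) x" using z phi_in_domD by simp
    also have "\<dots> = cnj \<mu> * cinner ?p x" by (simp add: D_phi cinner_scaleC_left)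
    also have "cnj (cnj \<mu> * cinner ?p x) = \<mu> * cinner x ?p" by (simp add: cinner_commute[of x])
    finally have "cinner z ?p = \<mu> * cinner x ?p" .
    thus ?thesis by (simp add: gft_def Mz_def)
  qed
  hence gz: "gft V \<phi>0 z = Mz (gft V \<phi>0 x)" by blast
  thus "gft V \<phi>0 (adj domD D x) = Mz (gft V \<phi>0 x)" by (simp add: adj)
  show "gft V \<phi>0 x \<in> Mz_dom V \<phi>0"
    using gz by (auto simp: Mz_dom_def WH_def Mz_def intro: range_eqI[of _ _ z])
qed

end

context admissible_pair
begin

definition phi_perp :: "'h set" where
  "phi_perp = {x. \<forall>\<nu>. cinner x (phi V \<phi>0 \<nu>) = 0}"

lemma phi_perp_csubspace: "csubspace phi_perp"
  unfolding csubspace_def phi_perp_def by (simp add: cinner_simps)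

lemma phi_perp_closed: "closed phi_perp"
  unfolding closed_sequential_limits
proof (intro allI impI, elim conjE)
  fix s l assume s: "\<forall>n. s n \<in> phi_perp" and l: "s \<longlonglongrightarrow> l"
  have "cinner l (phi V \<phi>0 \<nu>) = 0" for \<nu>
  proof -
    have "(\<lambda>n. cinner (s n) (phi V \<phi>0 \<nu>)) \<longlonglongrightarrow> cinner l (phi V \<phi>0 \<nu>)"
      by (intro tendsto_cinner l tendsto_const)
    moreover have "(\<lambda>n. cinner (s n) (phi V \<phi>0 \<nu>)) = (\<lambda>n. 0)" using s by (simp add: phi_perp_def)
    ultimately show ?thesis using LIMSEQ_unique tendsto_const by metis
  qed
  thus "l \<in> phi_perp" by (simp add: phi_perp_def)
qed

lemma phi_perp_no_D_eigenvector:
  assumes "w \<in> phi_perp" "w \<in> domD" "D w = \<nu> *\<^sub>C w"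
  shows "w = 0"
proof -
  obtain k where k: "w = k *\<^sub>C phi V \<phi>0 \<nu>" using eigenvector_D_eq_multiple_phi[OF assms(2,3)] by blast
  have "cinner w (phi V \<phi>0 \<nu>) = 0" using assms(1) by (simp add: phi_perp_def)
  hence "k * cinner (phi V \<phi>0 \<nu>) (phi V \<phi>0 \<nu>) = 0" by (simp add: k cinner_scaleC_left)
  hence "k = 0" using phi_nonzero by simp
  thus ?thesis using k by simp
qed

lemma right_inverse_shift_phi:
  assumes T: "\<And>v. T v \<in> domD" "\<And>v. D (T v) = v + \<alpha> *\<^sub>C T v" and \<nu>: "\<nu> \<noteq> \<alpha>"
  obtains k where "T (phi V \<phi>0 \<nu>) = k *\<^sub>C phi V \<phi>0 \<alpha> + (1 / (\<nu> - \<alpha>)) *\<^sub>C phi V \<phi>0 \<nu>"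
proof -
  let ?p = "phi V \<phi>0 \<nu>" and ?c = "1 / (\<nu> - \<alpha>)"
  \<comment> \<open>\<open>T \<phi>\<^sub>\<nu> - c \<phi>\<^sub>\<nu>\<close> is an eigenvector of \<open>D\<close> for the eigenvalue \<open>\<alpha>\<close>.\<close>
  have cp: "?c *\<^sub>C ?p \<in> domD" using domD_csubspace phi_in_domD by (rule complex_vector.subspace_scale)
  have "T ?p - ?c *\<^sub>C ?p \<in> domD" using complex_vector.subspace_diff[OF domD_csubspace T(1) cp] .
  moreover have "D (T ?p - ?c *\<^sub>C ?p) = \<alpha> *\<^sub>C (T ?p - ?c *\<^sub>C ?p)"
  proof -
    have "1 - ?c * \<nu> = - (\<alpha> * ?c)" using \<nu> by (simp add: field_simps)
    hence pc: "?p - (?c * \<nu>) *\<^sub>C ?p = - ((\<alpha> * ?c) *\<^sub>C ?p)"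
      using complex_vector.scale_left_diff_distrib[of 1 "?c * \<nu>" ?p] by simp
    have "D (T ?p - ?c *\<^sub>C ?p) = \<alpha> *\<^sub>C T ?p + (?p - (?c * \<nu>) *\<^sub>C ?p)"
      by (simp add: D_diff[OF T(1) cp] D_scaleC[OF phi_in_domD] D_phi T(2))
    also have "\<dots> = \<alpha> *\<^sub>C (T ?p - ?c *\<^sub>C ?p)"
      unfolding pc by (simp add: complex_vector.scale_right_diff_distrib)
    finally show ?thesis .
  qed
  ultimately obtain k where "T ?p - ?c *\<^sub>C ?p = k *\<^sub>C phi V \<phi>0 \<alpha>"
    using eigenvector_D_eq_multiple_phi[of "T ?p - ?c *\<^sub>C ?p" \<alpha>] by blast
  thus ?thesis using that[of k] by (simp add: algebra_simps)
qed

lemma phi_perp_invariant: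
  assumes T: "\<And>v. T v \<in> domD" "\<And>v. D (T v) = v + \<alpha> *\<^sub>C T v"
    and P: "\<And>x y. cinner (P x) y = cinner x (T y)" and x: "x \<in> phi_perp"
  shows "P x \<in> phi_perp"
proof -
  have ne: "cinner (P x) (phi V \<phi>0 \<nu>) = 0" if \<nu>: "\<nu> \<noteq> \<alpha>" for \<nu>
  proof -
    obtain k where "T (phi V \<phi>0 \<nu>) = k *\<^sub>C phi V \<phi>0 \<alpha> + (1 / (\<nu> - \<alpha>)) *\<^sub>C phi V \<phi>0 \<nu>"
      using right_inverse_shift_phi[OF T \<nu>] by blast
    thus ?thesis using x by (simp add: P cinner_simps phi_perp_def)
  qed
  \<comment> \<open>The remaining value \<open>\<nu> = \<alpha>\<close> follows by continuity of \<open>\<nu> \<mapsto> \<phi>\<^sub>\<nu>\<close>.\<close>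
  have eq: "cinner (P x) (phi V \<phi>0 \<alpha>) = 0"
  proof -
    let ?h = "\<lambda>\<nu>. cinner (P x) (phi V \<phi>0 \<nu>)"
    have "(?h \<longlongrightarrow> ?h \<alpha>) (at \<alpha>)"
      using isCont_phi[of \<alpha>] unfolding isCont_def by (intro tendsto_cinner tendsto_const)
    moreover have "(?h \<longlongrightarrow> 0) (at \<alpha>)"
      by (rule Lim_transform_eventually[OF tendsto_const]) (auto simp: ne eventually_at_filter)
    ultimately show ?thesis using tendsto_unique[OF at_neq_bot] by blast
  qed
  have "cinner (P x) (phi V \<phi>0 \<nu>) = 0" for \<nu>
    using eq ne by (cases "\<nu> = \<alpha>") simp_all
  thus ?thesis by (simp add: phi_perp_def)
qed

lemma phi_perp_trivial: "phi_perp = {0}"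
proof (rule ccontr)
  assume "phi_perp \<noteq> {0}"
  then obtain x0 where x0: "x0 \<in> phi_perp" "x0 \<noteq> 0"
    using complex_vector.subspace_0[OF phi_perp_csubspace] by blast
  obtain S \<mu> R where S: "S \<subseteq> domD" "self_adjoint_op S D" and R: "compact_op R"
    "\<And>y. R y \<in> S" "\<And>y. D (R y) - \<mu> *\<^sub>C R y = y" "\<And>x. x \<in> S \<Longrightarrow> R (D x - \<mu> *\<^sub>C x) = x"
    using self_adjoint_restriction unfolding has_compact_resolvent_def by blast
  interpret resolvent: self_adjoint_resolvent S D R \<mu>
    using S(2) R by unfold_locales (simp_all add: compact_op_def)
  let ?R' = "adj UNIV R"
  have "R x \<in> phi_perp" if "x \<in> phi_perp" for x
    by (rule phi_perp_invariant[where T = ?R' and \<alpha> = "cnj \<mu>"])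
       (use that S(1) resolvent.adj_R_in_dom resolvent.D_adj_R cinner_adj[OF resolvent.R_bounded] in auto)
  moreover have "?R' x \<in> phi_perp" if "x \<in> phi_perp" for x
    by (rule phi_perp_invariant[where T = R and \<alpha> = \<mu>])
       (use that S(1) R(2) resolvent.D_R cinner_adj[OF resolvent.R_bounded] in
         \<open>auto simp: cinner_commute[of "?R' _"] cinner_commute[of _ "R _"]\<close>)
  ultimately obtain w l where w: "w \<in> phi_perp" "w \<noteq> 0" "R w = l *\<^sub>C w"
    using normal_seq_compact_op_eigenvector[OF resolvent.R_bounded compact_op_imp_seq_compact_op[OF R(1)]
        resolvent.normal phi_perp_csubspace phi_perp_closed x0]
    by blast
  have "w \<in> domD" using resolvent.R_eigenvector(1)[OF w(3,2)] S(1) by blast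
  thus False using phi_perp_no_D_eigenvector[OF w(1) _ resolvent.R_eigenvector(2)[OF w(3,2)]] w(2) by blast
qed

lemma gft_inj: "inj (gft V \<phi>0)"
proof (rule injI)
  fix a b assume "gft V \<phi>0 a = gft V \<phi>0 b"
  hence "gft V \<phi>0 (a - b) (cnj \<nu>) = 0" for \<nu> by (simp add: gft_diff)
  hence "a - b \<in> phi_perp" by (simp add: phi_perp_def gft_def)
  thus "a = b" using phi_perp_trivial by simp
qed

end

lemma csubspace_adj_dom: "csubspace (adj_dom S T)"
proof -
  have "a + b \<in> adj_dom S T" if a: "a \<in> adj_dom S T" and b: "b \<in> adj_dom S T" for a b
  proof -
    obtain za where "\<forall>x\<in>S. cinner (T x) a = cinner x za" using a by (auto simp: adj_dom_def)
    moreover obtain zb where "\<forall>x\<in>S. cinner (T x) b = cinner x zb" using b by (auto simp: adj_dom_def)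
    ultimately
    have "\<forall>x\<in>S. cinner (T x) (a + b) = cinner x (za + zb)" by (simp add: cinner_add_right)
    thus ?thesis by (auto simp: adj_dom_def)
  qed
  moreover have "c *\<^sub>C a \<in> adj_dom S T" if a: "a \<in> adj_dom S T" for a c
  proof -
    obtain za where "\<forall>x\<in>S. cinner (T x) a = cinner x za" using a by (auto simp: adj_dom_def)
    hence "\<forall>x\<in>S. cinner (T x) (c *\<^sub>C a) = cinner x (c *\<^sub>C za)" by (simp add: cinner_scaleC_right)
    thus ?thesis by (auto simp: adj_dom_def)
  qed
  moreover have "0 \<in> adj_dom S T" by (auto simp: adj_dom_def intro: exI[of _ 0])
  ultimately show ?thesis unfolding csubspace_def by blast
qed

lemma adj_dom_within_self_adjoint_restriction:
  assumes S: "S \<subseteq> domD" "self_adjoint_op S D" and dense: "op_dense cinner UNIV domD"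
    and a: "a \<in> adj_dom domD D"
  shows "a \<in> S" and "adj domD D a = D a"
proof -
  have Sdense: "op_dense cinner UNIV S" and Sadj: "adj_dom S D = S" "\<And>y. y \<in> S \<Longrightarrow> adj S D y = D y"
    using S(2) by (auto simp: self_adjoint_op_def)
  obtain z where z: "\<forall>u\<in>domD. cinner (D u) a = cinner u z" using a by (auto simp: adj_dom_def)
  hence zS: "\<forall>u\<in>S. cinner (D u) a = cinner u z" using S(1) by blast
  hence "a \<in> adj_dom S D" by (auto simp: adj_dom_def)
  thus aS: "a \<in> S" using Sadj(1) by simp
  have "adj S D a = z" by (rule adj_eqI[OF Sdense zS])
  moreover have "adj domD D a = z" by (rule adj_eqI[OF dense z])
  ultimately show "adj domD D a = D a" using Sadj(2)[OF aS] by simp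
qed

lemma orthogonal_to_orthogonal_complement_of_vector:
  fixes w \<phi> :: "'a::complex_inner"
  assumes \<phi>: "\<phi> \<noteq> 0" and orth: "\<And>v. cinner \<phi> v = 0 \<Longrightarrow> cinner w v = 0"
  shows "w = (cinner w \<phi> / cinner \<phi> \<phi>) *\<^sub>C \<phi>"
proof -
  define c where "c = cinner w \<phi> / cinner \<phi> \<phi>"
  define v where "v = w - c *\<^sub>C \<phi>"
  have "cinner v \<phi> = 0" using \<phi> by (simp add: v_def c_def cinner_simps)
  hence "cinner \<phi> v = 0" by (metis cinner_commute complex_cnj_zero)
  hence "cinner w v = 0" by (rule orth)
  moreover have "cinner v v = cinner w v - c * cinner \<phi> v"
    by (simp add: v_def cinner_diff_left cinner_scaleC_left)
  ultimately have "cinner v v = 0" using \<open>cinner \<phi> v = 0\<close> by simp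
  thus ?thesis by (simp add: v_def c_def)
qed

context admissible_pair
begin

lemma inv_gft: "inv_into UNIV (gft V \<phi>0) (gft V \<phi>0 x) = x"
  by (rule inv_into_f_f[OF gft_inj UNIV_I])

lemma WH_eq_gft: "f \<in> WH V \<phi>0 \<Longrightarrow> f = gft V \<phi>0 (inv_into UNIV (gft V \<phi>0) f)"
  unfolding WH_def by (simp add: f_inv_into_f)

lemma WH_inner_gft: "WH_inner V \<phi>0 (gft V \<phi>0 a) (gft V \<phi>0 b) = cinner a b"
  by (simp add: WH_inner_def inv_gft)

lemma ip_conv_gft: "ip_conv (WH_inner V \<phi>0) (\<lambda>n. gft V \<phi>0 (s n)) (gft V \<phi>0 a) \<longleftrightarrow> s \<longlonglongrightarrow> a"
  by (simp add: ip_conv_def ip_norm_def gft_diff [symmetric] WH_inner_gft norm_eq_sqrt_cinner [symmetric]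
      tendsto_norm_zero_iff LIM_zero_iff)

lemma V_D_eq: "w \<in> domD \<Longrightarrow> \<exists>k. V (D w) = w - k *\<^sub>C \<phi>0"
proof -
  assume w: "w \<in> domD"
  have "w - V (D w) \<in> domD" using complex_vector.subspace_diff[OF domD_csubspace w V_in_domD] .
  moreover have "D (w - V (D w)) = 0 *\<^sub>C (w - V (D w))" by (simp add: D_diff[OF w V_in_domD] D_V)
  ultimately obtain k where "w - V (D w) = k *\<^sub>C phi V \<phi>0 0" by (rule eigenvector_D_eq_multiple_phi)
  hence "V (D w) = w - k *\<^sub>C \<phi>0" by (simp add: phi_0 algebra_simps)
  thus ?thesis by blast
qed

lemma adj_V_in_adj_dom_D:
  assumes v: "cinner \<phi>0 v = 0"
  shows "adj UNIV V v \<in> adj_dom domD D" and "adj domD D (adj UNIV V v) = v"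
proof -
  have eq: "\<forall>w\<in>domD. cinner (D w) (adj UNIV V v) = cinner w v"
  proof
    fix w assume "w \<in> domD"
    then obtain k where "V (D w) = w - k *\<^sub>C \<phi>0" using V_D_eq by blast
    moreover have "cinner \<phi>0 v = 0" by (rule v)
    ultimately show "cinner (D w) (adj UNIV V v) = cinner w v"
      by (simp add: cinner_adj[OF V_bounded, symmetric] cinner_simps)
  qed
  thus "adj UNIV V v \<in> adj_dom domD D" by (auto simp: adj_dom_def)
  show "adj domD D (adj UNIV V v) = v" by (rule adj_eqI[OF domD_dense eq])
qed

lemma adj_dom_D_dense: "op_dense cinner UNIV (adj_dom domD D)"
proof (rule op_dense_if_orthogonal_trivial[OF csubspace_adj_dom])
  fix y assume orth: "\<forall>x\<in>adj_dom domD D. cinner x y = 0"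
  \<comment> \<open>\<open>V y\<close> is orthogonal to \<open>\<phi>\<^sub>0\<^sup>\<bottom>\<close>, hence a multiple of \<open>\<phi>\<^sub>0\<close>, which \<open>D\<close> annihilates.\<close>
  have "cinner (V y) v = 0" if v: "cinner \<phi>0 v = 0" for v
  proof -
    have "cinner (adj UNIV V v) y = 0" using orth adj_V_in_adj_dom_D(1)[OF v] by blast
    thus ?thesis by (metis cinner_adj[OF V_bounded] cinner_commute complex_cnj_zero)
  qed
  then obtain c where "V y = c *\<^sub>C \<phi>0"
    using orthogonal_to_orthogonal_complement_of_vector[OF phi0(3)] by blast
  hence "D (V y) = c *\<^sub>C D \<phi>0" by (simp add: D_scaleC[OF phi0(1)])
  thus "y = 0" using phi0(2) by (simp add: D_V)
qed

lemma adj_D_symmetric: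
  assumes "x \<in> adj_dom domD D" "x' \<in> adj_dom domD D"
  shows "cinner (adj domD D x) x' = cinner x (adj domD D x')"
proof -
  obtain S where S: "S \<subseteq> domD" "self_adjoint_op S D" using self_adjoint_restriction by blast
  show ?thesis
    using adj_dom_within_self_adjoint_restriction[OF S domD_dense] assms
      self_adjoint_op_symmetric[OF S(2)] by simp
qed

lemma Mz_dom_eq_gft_adj_dom:
  assumes f: "f \<in> Mz_dom V \<phi>0"
  obtains x where "x \<in> adj_dom domD D" "f = gft V \<phi>0 x" "Mz f = gft V \<phi>0 (adj domD D x)"
proof -
  define x y where "x = inv_into UNIV (gft V \<phi>0) f" and "y = inv_into UNIV (gft V \<phi>0) (Mz f)"
  have fx: "f = gft V \<phi>0 x" and fy: "Mz f = gft V \<phi>0 y"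
    using f WH_eq_gft by (auto simp: Mz_dom_def x_def y_def Mz_def)
  \<comment> \<open>\<open>L (z f) = f\<close> identifies \<open>x\<close> as \<open>V\<^sup>* y\<close>, and \<open>(z f)(0) = 0\<close> says \<open>y \<perp> \<phi>\<^sub>0\<close>.\<close>
  have "gft V \<phi>0 (adj UNIV V y) = gft V \<phi>0 x"
    unfolding gft_adj_V fy[symmetric] using backward_shift_Mz[OF isCont_gft] fx by simp
  hence xy: "x = adj UNIV V y" using gft_inj by (simp add: inj_eq)
  have "cinner y \<phi>0 = Mz f 0" using fy by (simp add: gft_def phi_0)
  also have "\<dots> = 0" by (simp add: Mz_def)
  finally have "cinner y \<phi>0 = 0" .
  hence "cinner \<phi>0 y = 0" by (metis cinner_commute complex_cnj_zero)
  thus ?thesis using that[of x] adj_V_in_adj_dom_D fx fy xy by simp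
qed

end

context admissible_pair
begin

lemma WH_conv_pointwise:
  assumes "\<And>n. s n \<in> WH V \<phi>0" "a \<in> WH V \<phi>0" "ip_conv (WH_inner V \<phi>0) s a"
  shows "(\<lambda>n. s n \<mu>) \<longlonglongrightarrow> a \<mu>"
proof -
  define xs xa where "xs n = inv_into UNIV (gft V \<phi>0) (s n)" and "xa = inv_into UNIV (gft V \<phi>0) a" for n
  have s: "s = (\<lambda>n. gft V \<phi>0 (xs n))" and a: "a = gft V \<phi>0 xa"
    using assms(1,2) WH_eq_gft by (auto simp: xs_def xa_def)
  have "xs \<longlonglongrightarrow> xa" using assms(3) unfolding s a ip_conv_gft .
  hence "(\<lambda>n. cinner (xs n) (phi V \<phi>0 (cnj \<mu>))) \<longlonglongrightarrow> cinner xa (phi V \<phi>0 (cnj \<mu>))"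
    by (intro tendsto_cinner tendsto_const)
  thus ?thesis by (simp add: s a gft_def)
qed

lemma Mz_closed: "op_closed (WH_inner V \<phi>0) (WH V \<phi>0) (Mz_dom V \<phi>0) Mz"
  unfolding op_closed_def
proof (intro conjI allI impI; (elim conjE)?)
  show "Mz_dom V \<phi>0 \<subseteq> WH V \<phi>0" and "\<forall>x\<in>Mz_dom V \<phi>0. Mz x \<in> WH V \<phi>0"
    by (auto simp: Mz_dom_def Mz_def)
  fix s a b
  assume s: "\<forall>n. s n \<in> Mz_dom V \<phi>0" and a: "a \<in> WH V \<phi>0" and b: "b \<in> WH V \<phi>0"
    and sa: "ip_conv (WH_inner V \<phi>0) s a" and sb: "ip_conv (WH_inner V \<phi>0) (\<lambda>n. Mz (s n)) b"
  have "b \<mu> = \<mu> * a \<mu>" for \<mu>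
  proof -
    have "(\<lambda>n. \<mu> * s n \<mu>) \<longlonglongrightarrow> \<mu> * a \<mu>"
      using s a sa by (intro tendsto_mult tendsto_const WH_conv_pointwise) (auto simp: Mz_dom_def)
    moreover have "(\<lambda>n. \<mu> * s n \<mu>) \<longlonglongrightarrow> b \<mu>"
      using WH_conv_pointwise[of "\<lambda>n. Mz (s n)" b, OF _ b sb] s by (auto simp: Mz_dom_def Mz_def)
    ultimately show ?thesis using LIMSEQ_unique by blast
  qed
  hence "Mz a = b" by (auto simp: Mz_def)
  thus "a \<in> Mz_dom V \<phi>0" and "Mz a = b" using a b by (auto simp: Mz_dom_def Mz_def)
qed

lemma Mz_symmetric: "op_symmetric (WH_inner V \<phi>0) (WH V \<phi>0) (Mz_dom V \<phi>0) Mz"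
  unfolding op_symmetric_def op_dense_def
proof (intro conjI ballI)
  show "Mz_dom V \<phi>0 \<subseteq> WH V \<phi>0" by (auto simp: Mz_dom_def)
next
  fix a assume "a \<in> WH V \<phi>0"
  then obtain xa where a: "a = gft V \<phi>0 xa" by (auto simp: WH_def)
  obtain s where s: "\<forall>n. s n \<in> adj_dom domD D" "s \<longlonglongrightarrow> xa"
    using adj_dom_D_dense unfolding op_dense_def ip_conv_cinner by blast
  have "\<forall>n. gft V \<phi>0 (s n) \<in> Mz_dom V \<phi>0" using s(1) gft_adj_D(1) by blast
  moreover have "ip_conv (WH_inner V \<phi>0) (\<lambda>n. gft V \<phi>0 (s n)) a" unfolding a ip_conv_gft by (rule s(2))
  ultimately show "\<exists>s. (\<forall>n. s n \<in> Mz_dom V \<phi>0) \<and> ip_conv (WH_inner V \<phi>0) s a"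
    by (intro exI[where x = "\<lambda>n. gft V \<phi>0 (s n)"] conjI)
next
  fix f assume "f \<in> Mz_dom V \<phi>0"
  thus "Mz f \<in> WH V \<phi>0" by (auto simp: Mz_dom_def Mz_def)
next
  fix f g assume f: "f \<in> Mz_dom V \<phi>0" and g: "g \<in> Mz_dom V \<phi>0"
  obtain x where x: "x \<in> adj_dom domD D" "f = gft V \<phi>0 x" "Mz f = gft V \<phi>0 (adj domD D x)"
    using Mz_dom_eq_gft_adj_dom[OF f] by blast
  obtain x' where x': "x' \<in> adj_dom domD D" "g = gft V \<phi>0 x'" "Mz g = gft V \<phi>0 (adj domD D x')"
    using Mz_dom_eq_gft_adj_dom[OF g] by blast
  show "WH_inner V \<phi>0 (Mz f) g = WH_inner V \<phi>0 f (Mz g)"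
    unfolding x(3) x'(3) unfolding x(2) x'(2) WH_inner_gft by (rule adj_D_symmetric[OF x(1) x'(1)])
qed

lemma D_shift_right_inverse:
  obtains B where "bounded_clinear_op B" "\<And>w. B w \<in> domD" "\<And>w. D (B w) - \<nu> *\<^sub>C B w = w"
proof -
  obtain S where S: "bounded_clinear_op S" "\<And>w. S w - \<nu> *\<^sub>C V (S w) = w"
    "\<And>x. S (x - \<nu> *\<^sub>C V x) = x"
    using I_minus_V_invertible[of \<nu>] by blast
  have "D (V (S w)) - \<nu> *\<^sub>C V (S w) = w" for w using S(2) by (simp add: D_V)
  thus ?thesis by (rule that[of "\<lambda>w. V (S w)", OF bounded_op_compose[OF V_bounded S(1)] V_in_domD])
qed

lemma adj_D_shift_surjective:
  assumes y: "cinner y (phi V \<phi>0 (cnj \<mu>)) = 0"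
  obtains x where "x \<in> adj_dom domD D" "adj domD D x = y + \<mu> *\<^sub>C x"
proof -
  let ?\<nu> = "cnj \<mu>"
  obtain B where B: "bounded_clinear_op B" "\<And>w. B w \<in> domD" "\<And>w. D (B w) - ?\<nu> *\<^sub>C B w = w"
    using D_shift_right_inverse[of ?\<nu>] by blast
  define x where "x = adj UNIV B y"
  have eq: "\<forall>w\<in>domD. cinner (D w) x = cinner w (y + \<mu> *\<^sub>C x)"
  proof
    fix w assume w: "w \<in> domD"
    define t where "t = D w - ?\<nu> *\<^sub>C w"
    \<comment> \<open>\<open>B t - w\<close> lies in the kernel of \<open>D - \<nu>\<close>, i.e. in the span of \<open>\<phi>\<^sub>\<nu>\<close>, which is orthogonal to \<open>y\<close>.\<close>
    have Bt_w: "B t - w \<in> domD" using complex_vector.subspace_diff[OF domD_csubspace B(2) w] .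
    have "D (B t - w) - ?\<nu> *\<^sub>C (B t - w) = (D (B t) - ?\<nu> *\<^sub>C B t) - t"
      by (simp add: D_diff[OF B(2) w] t_def complex_vector.scale_right_diff_distrib algebra_simps)
    hence "D (B t - w) = ?\<nu> *\<^sub>C (B t - w)" by (simp add: B(3))
    then obtain k where "B t - w = k *\<^sub>C phi V \<phi>0 ?\<nu>"
      by (rule eigenvector_D_eq_multiple_phi[OF Bt_w])
    hence "B t = w + k *\<^sub>C phi V \<phi>0 ?\<nu>" by (simp add: algebra_simps)
    moreover have "cinner (phi V \<phi>0 ?\<nu>) y = 0" by (subst cinner_commute) (simp add: y)
    ultimately have "cinner (B t) y = cinner w y" by (simp add: cinner_add_left cinner_scaleC_left)
    hence "cinner t x = cinner w y" by (simp add: x_def cinner_adj[OF B(1)])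
    thus "cinner (D w) x = cinner w (y + \<mu> *\<^sub>C x)"
      by (simp add: t_def cinner_simps diff_eq_eq)
  qed
  hence "x \<in> adj_dom domD D" by (auto simp: adj_dom_def)
  moreover have "adj domD D x = y + \<mu> *\<^sub>C x" by (rule adj_eqI[OF domD_dense eq])
  ultimately show ?thesis by (rule that)
qed

lemma Mz_shift_range:
  "(\<lambda>f. Mz f - (\<lambda>z. \<mu> * f z)) ` Mz_dom V \<phi>0 = {f \<in> WH V \<phi>0. f \<mu> = 0}"
proof (intro set_eqI iffI)
  fix g assume "g \<in> (\<lambda>f. Mz f - (\<lambda>z. \<mu> * f z)) ` Mz_dom V \<phi>0"
  then obtain f where f: "f \<in> Mz_dom V \<phi>0" and g: "g = Mz f - (\<lambda>z. \<mu> * f z)" by blast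
  obtain x where x: "f = gft V \<phi>0 x" "Mz f = gft V \<phi>0 (adj domD D x)"
    using Mz_dom_eq_gft_adj_dom[OF f] by blast
  have "g = gft V \<phi>0 (adj domD D x - \<mu> *\<^sub>C x)"
    unfolding g x(2) unfolding x(1) by (simp add: gft_diff gft_scaleC fun_diff_def)
  moreover have "g \<mu> = 0" by (simp add: g Mz_def)
  ultimately show "g \<in> {f \<in> WH V \<phi>0. f \<mu> = 0}" by (simp add: WH_def)
next
  fix g assume "g \<in> {f \<in> WH V \<phi>0. f \<mu> = 0}"
  then obtain y where g: "g = gft V \<phi>0 y" and "g \<mu> = 0" by (auto simp: WH_def)
  hence "cinner y (phi V \<phi>0 (cnj \<mu>)) = 0" by (simp add: gft_def)
  then obtain x where x: "x \<in> adj_dom domD D" "adj domD D x = y + \<mu> *\<^sub>C x"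
    by (rule adj_D_shift_surjective)
  have "Mz (gft V \<phi>0 x) = gft V \<phi>0 (y + \<mu> *\<^sub>C x)" using gft_adj_D(2)[OF x(1)] x(2) by simp
  hence "Mz (gft V \<phi>0 x) - (\<lambda>z. \<mu> * gft V \<phi>0 x z) = g"
    by (simp add: g gft_add gft_scaleC fun_eq_iff)
  thus "g \<in> (\<lambda>f. Mz f - (\<lambda>z. \<mu> * f z)) ` Mz_dom V \<phi>0"
    using gft_adj_D(1)[OF x(1)] by (auto intro: image_eqI[of _ _ "gft V \<phi>0 x"])
qed

end

theorem proposition4p1:
  fixes domD :: "'h::chilbert set" and D V :: "'h \<Rightarrow> 'h" and \<phi>0 :: 'h
  assumes sep: "separable_space TYPE('h)"
    and adm: "admissible domD D V"
    and phi0: "\<phi>0 \<in> domD" "D \<phi>0 = 0" "\<phi>0 \<noteq> 0"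
  shows "(\<forall>x. gft V \<phi>0 (adj UNIV V x) = backward_shift (gft V \<phi>0 x)) \<and>
         (\<forall>x \<in> adj_dom domD D.
           gft V \<phi>0 x \<in> Mz_dom V \<phi>0 \<and> gft V \<phi>0 (adj domD D x) = Mz (gft V \<phi>0 x)) \<and>
         op_closed (WH_inner V \<phi>0) (WH V \<phi>0) (Mz_dom V \<phi>0) Mz \<and>
         op_symmetric (WH_inner V \<phi>0) (WH V \<phi>0) (Mz_dom V \<phi>0) Mz \<and>
         (\<forall>\<mu>. (\<lambda>f. Mz f - (\<lambda>z. \<mu> * f z)) ` Mz_dom V \<phi>0 = {f \<in> WH V \<phi>0. f \<mu> = 0})"
proof -
  interpret admissible_pair domD D V \<phi>0
    using adm phi0 by unfold_locales
  show ?thesis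
    by (intro conjI allI ballI gft_adj_V gft_adj_D Mz_closed Mz_symmetric Mz_shift_range)
qed

end
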